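(* Let $X$ be a complete doubling metric space, let $\{E_{\mathtt{i}}\}_{\mathtt{i}\in\Sigma}$ be a Moran construction in $X$ with limit set $E$, and let $\mu$ be a measure supported on $E$. Then for $\mu$-almost all $x_{\mathtt{i}}\in E$ (where $\mathtt{i}\in\Sigma_\infty$), \[ \overline{\dim}_{\mathrm{loc}}(\mu,x_{\mathtt{i}})=\limsup_{n\to\infty}\frac{\log\mu(E_{\mathtt{i}|_n})}{\log\operatorname{diam}(E_{\mathtt{i}|_n})},\qquad \underline{\dim}_{\mathrm{loc}}(\mu,x_{\mathtt{i}})=\liminf_{n\to\infty}\frac{\log\mu(E_{\mathtt{i}|_n})}{\log\operatorname{diam}(E_{\mathtt{i}|_n})}. \]
   Context: A metric space is doubling if there is $N$ such that every closed ball $B(x,r)$ is covered by $N$ closed balls of radius $r/2$. A "measure" is a nontrivial Borel regular outer measure, finite on bounded sets. Local dimensions: $\overline{\dim}_{\mathrm{loc}}(\mu,x)=\limsup_{r\downarrow0}\log\mu(B(x,r))/\log r$, $\underline{\dim}_{\mathrm{loc}}(\mu,x)=\liminf_{r\downarrow0}\log\mu(B(x,r))/\log r$. Words: $I$ is a countable set, $I^0=\{\varnothing\}$, $I^\infty=I^{\mathbb{N}}$; for a word $\mathtt{i}=i_1i_2\cdots$, $\mathtt{i}|_n=i_1\cdots i_n$, $\mathtt{i}|_0=\varnothing$, and for $\mathtt{i}\in I^n$, $\mathtt{i}^-=\mathtt{i}|_{n-1}$. For $\Sigma\subset\bigcup_{n\ge0}I^n$, $\Sigma_n=\Sigma\cap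 I^n$ and $\Sigma_\infty=\{\mathtt{i}\in I^\infty:\mathtt{i}|_n\in\Sigma_n\ \forall n\}$. If $\mathtt{i}\in\Sigma$ and $\mathtt{j}=\mathtt{i}i\in\Sigma$ for some $i\in I$, write $\mathtt{j}\prec\mathtt{i}$ (offspring). $\Sigma$ is a codetree if $\varnothing\in\Sigma$, $\mathtt{i}^-\in\Sigma$ whenever $\varnothing\ne\mathtt{i}\in\Sigma$, and each $\mathtt{i}\in\Sigma$ has a positive finite number of offspring. A Moran construction is a collection $\{E_{\mathtt{i}}\subset X:\mathtt{i}\in\Sigma\}$ of compact sets of positive diameter, $\Sigma$ a codetree, such that: (M1) $E_{\mathtt{i}}\subset E_{\mathtt{i}^-}$ for $\mathtt{i}\ne\varnothing$; (M2) $\operatorname{diam}(E_{\mathtt{i}|_n})\to0$ for each $\mathtt{i}\in\Sigma_\infty$; (M3) $E_{\mathtt{i}i}\cap E_{\mathtt{i}j}=\emptyset$ if $\mathtt{i}i,\mathtt{i}j\in\Sigma$, $i\ne j$; (M4) there is a uniform constant $C_0>0$ such that each $E_{\mathtt{i}}$ contains a ball $B(x,C_0\operatorname{diam}(E_{\mathtt{i}}))$ for some $x\in E_{\mathtt{i}}$; (M5) $\log\operatorname{diam}(E_{\mathtt{i}|_n})/\log\min\{\operatorname{diam}(E_{\mathtt{j}}):\mathtt{j}\prec\mathtt{i}|_n\}\to1$ as $n\to\infty$, uniformly in $\mathtt{i}\in\Sigma_\infty$. The limit set is $E=\bigcap_{n}\bigcup_{\mathtt{i}\in\Sigma_n}E_{\mathtt{i}}$,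 and for $\mathtt{i}\in\Sigma_\infty$, $x_{\mathtt{i}}$ is the unique point of $\bigcap_n E_{\mathtt{i}|_n}$. *)

theory Defs
  imports "HOL-Analysis.Analysis"
begin

definition doubling_space :: "'a::metric_space itself \<Rightarrow> bool" where
  "doubling_space _ \<longleftrightarrow>
     (\<exists>N::nat. \<forall>(x::'a) (r::real). r > 0 \<longrightarrow>
        (\<exists>F. finite F \<and> card F \<le> N \<and> cball x r \<subseteq> (\<Union>y\<in>F. cball y (r/2))))"

definition outer_measure :: "('a set \<Rightarrow> ennreal) \<Rightarrow> bool" where
  "outer_measure \<mu> \<longleftrightarrow>
     \<mu> {} = 0 \<and>
     (\<forall>A B. A \<subseteq> B \<longrightarrow> \<mu> A \<le> \<mu> B) \<and>
     (\<forall>A::nat \<Rightarrow> 'a set. \<mu> (\<Union>n. A n) \<le> (\<Sum>n. \<mu> (A n)))"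

definition om_measurable :: "('a set \<Rightarrow> ennreal) \<Rightarrow> 'a set \<Rightarrow> bool" where
  "om_measurable \<mu> B \<longleftrightarrow> (\<forall>A. \<mu> A = \<mu> (A \<inter> B) + \<mu> (A - B))"

definition borel_regular_outer_measure :: "('a::topological_space set \<Rightarrow> ennreal) \<Rightarrow> bool" where
  "borel_regular_outer_measure \<mu> \<longleftrightarrow>
     outer_measure \<mu> \<and>
     (\<forall>B \<in> sets borel. om_measurable \<mu> B) \<and>
     (\<forall>A. \<exists>B \<in> sets borel. A \<subseteq> B \<and> \<mu> B = \<mu> A)"

definition is_measure :: "('a::metric_space set \<Rightarrow> ennreal) \<Rightarrow> bool" where
  "is_measure \<mu> \<longleftrightarrow>
     borel_regular_outer_measure \<mu> \<and>
     (\<exists>A. \<mu> A \<noteq> 0) \<and>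
     (\<forall>A. bounded A \<longrightarrow> \<mu> A < \<infinity>)"

definition support :: "('a::metric_space set \<Rightarrow> ennreal) \<Rightarrow> 'a set" where
  "support \<mu> = {x. \<forall>r>0. \<mu> (ball x r) > 0}"

definition upper_local_dim :: "('a::metric_space set \<Rightarrow> ennreal) \<Rightarrow> 'a \<Rightarrow> ereal" where
  "upper_local_dim \<mu> x =
     Limsup (at_right (0::real)) (\<lambda>r. ereal (ln (enn2real (\<mu> (cball x r))) / ln r))"

definition lower_local_dim :: "('a::metric_space set \<Rightarrow> ennreal) \<Rightarrow> 'a \<Rightarrow> ereal" where
  "lower_local_dim \<mu> x =
     Liminf (at_right (0::real)) (\<lambda>r. ereal (ln (enn2real (\<mu> (cball x r))) / ln r))"

text \<open>Finite words are lists (the word i_1...i_n is the list [i_1,...,i_n]),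
  infinite words are functions nat \<Rightarrow> 'i (i_{k+1} is s k).  The alphabet I is the
  countable type 'i.\<close>

definition prefix_of :: "(nat \<Rightarrow> 'i) \<Rightarrow> nat \<Rightarrow> 'i list" where
  "prefix_of s n = map s [0..<n]"

definition offspring :: "'i list set \<Rightarrow> 'i list \<Rightarrow> 'i list set" where
  "offspring \<Sigma> w = {v. \<exists>a. v = w @ [a] \<and> v \<in> \<Sigma>}"

definition level :: "'i list set \<Rightarrow> nat \<Rightarrow> 'i list set" where
  "level \<Sigma> n = {w \<in> \<Sigma>. length w = n}"

definition infinite_words :: "'i list set \<Rightarrow> (nat \<Rightarrow> 'i) set" where
  "infinite_words \<Sigma> = {s. \<forall>n. prefix_of s n \<in> \<Sigma>}"

definition codetree :: "'i list set \<Rightarrow> bool" where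
  "codetree \<Sigma> \<longleftrightarrow>
     [] \<in> \<Sigma> \<and>
     (\<forall>w \<in> \<Sigma>. w \<noteq> [] \<longrightarrow> butlast w \<in> \<Sigma>) \<and>
     (\<forall>w \<in> \<Sigma>. finite (offspring \<Sigma> w) \<and> offspring \<Sigma> w \<noteq> {})"

definition moran_construction ::
  "'i list set \<Rightarrow> ('i list \<Rightarrow> 'a::metric_space set) \<Rightarrow> bool" where
  "moran_construction \<Sigma> E \<longleftrightarrow>
     codetree \<Sigma> \<and>
     (\<forall>w \<in> \<Sigma>. compact (E w) \<and> diameter (E w) > 0) \<and>
     \<comment> \<open>(M1)\<close>
     (\<forall>w \<in> \<Sigma>. w \<noteq> [] \<longrightarrow> E w \<subseteq> E (butlast w)) \<and>
     \<comment> \<open>(M2)\<close>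
     (\<forall>s \<in> infinite_words \<Sigma>. (\<lambda>n. diameter (E (prefix_of s n))) \<longlonglongrightarrow> 0) \<and>
     \<comment> \<open>(M3)\<close>
     (\<forall>w a b. w @ [a] \<in> \<Sigma> \<longrightarrow> w @ [b] \<in> \<Sigma> \<longrightarrow> a \<noteq> b \<longrightarrow> E (w @ [a]) \<inter> E (w @ [b]) = {}) \<and>
     \<comment> \<open>(M4)\<close>
     (\<exists>C0>0. \<forall>w \<in> \<Sigma>. \<exists>x \<in> E w. cball x (C0 * diameter (E w)) \<subseteq> E w) \<and>
     \<comment> \<open>(M5), uniformly in s\<close>
     (\<forall>\<epsilon>>0. \<exists>N. \<forall>s \<in> infinite_words \<Sigma>. \<forall>n \<ge> N.
        \<bar>ln (diameter (E (prefix_of s n))) /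
           ln (Min (diameter ` E ` offspring \<Sigma> (prefix_of s n))) - 1\<bar> < \<epsilon>)"

definition limit_set :: "'i list set \<Rightarrow> ('i list \<Rightarrow> 'a set) \<Rightarrow> 'a set" where
  "limit_set \<Sigma> E = (\<Inter>n. \<Union>w \<in> level \<Sigma> n. E w)"

text \<open>The point x_i: the unique point of the intersection of the E_{i|n}.\<close>
definition moran_point :: "('i list \<Rightarrow> 'a set) \<Rightarrow> (nat \<Rightarrow> 'i) \<Rightarrow> 'a" where
  "moran_point E s = (THE x. x \<in> (\<Inter>n. E (prefix_of s n)))"

end

theory Submission
  imports Defs
begin

text \<open>
  Fix an address \<open>i\<close> and write \<open>x\<close> for \<open>x\<^sub>i\<close> and \<open>E n\<close> for \<open>E (i|n)\<close>.  Since \<open>x \<in> E n\<close>,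
  the cylinder \<open>E n\<close> lies in the ball of radius \<open>diam (E n)\<close> about \<open>x\<close>, so balls are at
  least as heavy as cylinders of comparable size; by (M5) the diameters \<open>diam (E n)\<close>
  shrink slowly on a logarithmic scale, which is enough to pass between radii and
  cylinder scales.  The converse comparison holds only almost everywhere: call \<open>x\<close>
  uncontrolled at scale \<open>2^-k\<close> if \<open>\<mu>(B(x,2^-k))\<close> exceeds \<open>2^(k/J)\<close> times the measure of
  every cylinder of \<open>x\<close> of diameter at most \<open>2^-k\<close>.  The maximal cylinders of diameter
  at most \<open>2^-k\<close> are disjoint and, by (M4), (M5) and doubling, each is close to only
  subexponentially many others, so double counting bounds the measure of the points
  uncontrolled at scale \<open>2^-k\<close> by a geometric sequence; by Borel--Cantelli almost every
  point is uncontrolled at only finitely many scales.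
\<close>

section \<open>Elementary estimates\<close>

lemma dyadic_bracket:
  fixes d :: real
  assumes "0 < d" "d < 1"
  shows "\<exists>k\<ge>1. (1/2)^k < d \<and> d \<le> (1/2)^(k-1)"
proof -
  obtain k0 where k0: "(1/2::real)^k0 < d" using real_arch_pow_inv[of d "1/2"] assms by auto
  define k where "k = (LEAST k. (1/2::real)^k < d)"
  have k: "(1/2::real)^k < d" unfolding k_def by (rule LeastI[of _ k0]) (rule k0)
  have k1: "k \<ge> 1" using k assms by (cases k) auto
  have "\<not> (1/2::real)^(k-1) < d" unfolding k_def
    by (rule not_less_Least) (use k1 k_def in auto)
  then show ?thesis using k k1 by (auto simp: not_less)
qed

lemma ln_half_power: "ln ((1/2::real)^k) = - (real k * ln 2)"
  by (simp add: ln_realpow ln_div)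

lemma ln_powr_two_power: "ln (((2::real) powr \<eta>)^k) = real k * (\<eta> * ln 2)"
  by (simp add: ln_realpow ln_powr)

lemma ln_quotient_ge_dyadic:
  fixes x y :: real
  assumes "0 < x" "y < 1" "x \<le> (1/2)^j" "(1/2)^i \<le> y"
  shows "real j / real i \<le> ln x / ln y"
proof -
  have y: "0 < y" using assms(4) by (meson less_le_trans zero_less_divide_1_iff zero_less_numeral zero_less_power)
  have i: "i > 0" using assms(2,4) by (cases i) auto
  have lx: "ln x \<le> - (real j * ln 2)" using assms(1,3) ln_le_cancel_iff[of x "(1/2)^j"] by (simp add: ln_half_power)
  have ly: "- (real i * ln 2) \<le> ln y" using y assms(4) ln_le_cancel_iff[of "(1/2)^i" y] by (simp add: ln_half_power)
  have "ln y < 0" using y assms(2) by simp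
  have "(real j * ln 2) / (real i * ln 2) \<le> (- ln x) / (- ln y)"
    by (rule frac_le) (use lx ly i \<open>ln y < 0\<close> ln_2_less_1 in \<open>auto intro: order_trans[OF lx]\<close>)
  then show ?thesis by simp
qed

lemma tendsto_const_divide_ln_at_right_0: "((\<lambda>r. C / ln r) \<longlongrightarrow> (0::real)) (at_right 0)"
  by (rule tendsto_divide_0[OF tendsto_const])
    (rule filterlim_mono[OF ln_at_0 at_bot_le_at_infinity order_refl])

lemma two_power_div_le_powr:
  assumes "J > 0" "1 / real J \<le> \<eta>"
  shows "(2::real)^(k div J) \<le> (2 powr \<eta>)^k"
proof -
  have "real (k div J) * real J \<le> real k"
    by (metis div_times_less_eq_dividend of_nat_le_iff of_nat_mult)
  then have "real (k div J) \<le> real k * (1 / real J)" using assms(1) by (simp add: le_divide_eq)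
  also have "\<dots> \<le> real k * \<eta>" using assms(2) by (intro mult_left_mono) auto
  finally have "(2::real) powr real (k div J) \<le> 2 powr (\<eta> * real k)"
    by (intro powr_mono) (simp_all add: mult.commute)
  then show ?thesis by (simp add: powr_realpow powr_powr[symmetric])
qed

lemma ln_ge_of_ln_ratio_near_one:
  fixes d m \<epsilon> :: real
  assumes m: "0 < m" "m < 1" and e: "0 < \<epsilon>" "\<epsilon> < 1" and d: "d > 0"
    and r: "\<bar>ln d / ln m - 1\<bar> < \<epsilon>"
  shows "d < 1 \<and> ln m \<ge> ln d / (1 - \<epsilon>)"
proof -
  have lm: "ln m < 0" using m by simp
  define q where "q = ln d / ln m"
  have q: "q > 1 - \<epsilon>" using r unfolding q_def by linarith
  have q0: "q > 0" using q e by simp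
  have ld: "ln d = q * ln m" unfolding q_def using lm by simp
  have "ln d < 0" using ld q0 lm by (simp add: mult_pos_neg)
  then have "d < 1" using d by simp
  moreover have "ln d / (1 - \<epsilon>) \<le> ln m"
  proof -
    have "ln d / (1 - \<epsilon>) = ln m * (q / (1 - \<epsilon>))" using ld by simp
    also have "\<dots> \<le> ln m * 1"
    proof (rule mult_left_mono_neg)
      show "1 \<le> q / (1 - \<epsilon>)" using q e by simp
    qed (use lm in simp)
    finally show ?thesis by simp
  qed
  ultimately show ?thesis by simp
qed

lemma real_divide_less_div_Suc:
  assumes "L > (0::nat)"
  shows "real n / real L < real (n div L) + 1"
proof -
  have "real n = real L * real (n div L) + real (n mod L)" by (simp flip: of_nat_mult of_nat_add)
  moreover have "real (n mod L) < real L" using assms by simp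
  ultimately have "real n < real L * (real (n div L) + 1)" by (simp add: algebra_simps)
  then show ?thesis using assms by (simp add: divide_less_eq mult.commute)
qed

lemma powr_half_bound:
  assumes D: "D > (0::nat)"
  shows "((1/2::real)^k) powr (1 + 1/real D) \<ge> (1/2)^(k + k div D + 1)"
proof -
  have "((1/2::real)^k) powr (1 + 1/real D) = ((1/2) powr real k) powr (1 + 1/real D)"
    by (simp add: powr_realpow)
  also have "\<dots> = (1/2) powr (real k * (1 + 1/real D))" by (simp add: powr_powr)
  also have "\<dots> \<ge> (1/2) powr (real (k + k div D + 1))"
  proof (rule powr_mono')
    have "real k / real D < real (k div D) + 1" using D by (rule real_divide_less_div_Suc)
    then show "real k * (1 + 1/real D) \<le> real (k + k div D + 1)" by (simp add: algebra_simps)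
  qed auto
  also have "(1/2::real) powr (real (k + k div D + 1)) = (1/2)^(k + k div D + 1)" by (rule powr_realpow) simp
  finally show ?thesis .
qed

lemma real_power_div_le_two_power: "real (N ^ (k div (L * (N + 1)))) \<le> (2::real) ^ (k div L)"
proof -
  have "real (N ^ (k div (L * (N + 1)))) \<le> (2 ^ N) ^ (k div (L * (N + 1)))"
    unfolding of_nat_power by (rule power_mono) (use of_nat_less_two_power[of N, where 'a=real] in auto)
  also have "\<dots> = 2 ^ (N * ((k div L) div (N + 1)))" by (simp only: power_mult div_mult2_eq)
  also have "\<dots> \<le> 2 ^ (k div L)"
  proof (rule power_increasing)
    have "N * ((k div L) div (N + 1)) \<le> (k div L) div (N + 1) * (N + 1)" by simp
    also have "\<dots> \<le> k div L" by (rule div_times_less_eq_dividend)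
    finally show "N * ((k div L) div (N + 1)) \<le> k div L" .
  qed simp
  finally show ?thesis .
qed

lemma le_half_power_div_of_count:
  fixes b e :: real
  assumes "0 \<le> b" "0 \<le> e" and le: "2^(k div J) * b \<le> real (N^(c + k div (2*J*(N+1)) + 2)) * e"
  shows "b \<le> real (N^(c+2)) * e * (1/2)^(k div (2*J))"
proof -
  define q where "q = k div (2*J)"
  have Nq: "real (N^(k div (2*J*(N+1)))) \<le> 2^q"
    using real_power_div_le_two_power[of N k "2*J"] unfolding q_def by simp
  have "2 * q \<le> k div J" unfolding q_def using div_mult2_eq[of k J 2] by (simp add: mult.commute)
  then have "(2::real)^q * 2^q \<le> 2^(k div J)"
    by (metis power_add mult_2 power_increasing one_le_numeral)
  then have "2^q * (2^q * b) \<le> 2^(k div J) * b" using assms(1) by (simp add: mult_right_mono mult.assoc[symmetric])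
  also have "\<dots> \<le> real (N^(c+2)) * real (N^(k div (2*J*(N+1)))) * e"
    using le by (simp add: power_add algebra_simps)
  also have "\<dots> \<le> 2^q * (real (N^(c+2)) * e)"
    using Nq assms(2) by (simp add: mult_right_mono mult_left_mono algebra_simps)
  finally have "2^q * b \<le> real (N^(c+2)) * e" by simp
  then show ?thesis unfolding q_def by (simp add: field_simps power_one_over)
qed

lemma summable_half_power_div:
  assumes "L > (0::nat)"
  shows "summable (\<lambda>n. (1/2::real)^(n div L))"
proof -
  define q where "q = (1/2::real) powr (1/real L)"
  have q: "0 < q" "q < 1" unfolding q_def using assms by (auto simp: powr_def divide_neg_pos)
  have bound: "norm ((1/2::real)^(n div L)) \<le> 2 * q^n" for n
  proof -
    have "real n / real L < real (n div L) + 1" using assms by (rule real_divide_less_div_Suc)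
    then have "real n / real L - 1 \<le> real (n div L)" by simp
    then have "(1/2::real) powr real (n div L) \<le> (1/2) powr (real n / real L - 1)"
      by (intro powr_mono') auto
    also have "\<dots> = 2 * q^n" by (simp add: q_def powr_diff powr_powr powr_realpow[symmetric])
    finally show ?thesis by (simp add: powr_realpow)
  qed
  have "summable (\<lambda>n. 2 * q^n)" using q by (intro summable_mult summable_geometric) auto
  then show ?thesis using bound by (rule summable_comparison_test')
qed

section \<open>Comparing exponents of balls and of nested cylinders\<close>

text \<open>\<open>a n\<close> stands for the measure of the \<open>n\<close>-th cylinder of a nested sequence with
  diameters \<open>d n\<close>, and \<open>b r\<close> for the measure of the ball of radius \<open>r\<close> about their common
  point.  \<open>dyadic_control\<close> is the only upper bound of balls by cylinders.\<close>

locale scale_comparison =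
  fixes d a :: "nat \<Rightarrow> real" and b :: "real \<Rightarrow> real"
  assumes d_pos: "\<And>n. d n > 0" and d_antimono: "\<And>m n. m \<le> n \<Longrightarrow> d n \<le> d m"
    and d_tendsto_0: "d \<longlonglongrightarrow> 0"
    and a_antimono: "\<And>m n. m \<le> n \<Longrightarrow> a n \<le> a m"
    and b_pos: "\<And>r. r > 0 \<Longrightarrow> b r > 0" and b_mono: "\<And>r r'. 0 < r \<Longrightarrow> r \<le> r' \<Longrightarrow> b r \<le> b r'"
    and a_le_b: "\<And>n r. d n \<le> r \<Longrightarrow> a n \<le> b r"
    and ln_d_ratio: "\<And>\<epsilon>. \<epsilon> > 0 \<Longrightarrow> eventually (\<lambda>n. ln (d (Suc n)) \<ge> (1+\<epsilon>) * ln (d n)) sequentially"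
    and dyadic_control: "\<And>\<eta>. \<eta> > 0 \<Longrightarrow>
      \<exists>K. \<forall>k\<ge>K. \<exists>m. d m \<le> (1/2)^k \<and> b ((1/2)^k) \<le> (2 powr \<eta>)^k * a m"
begin

definition ball_exp :: "real \<Rightarrow> real" where "ball_exp r = ln (b r) / ln r"

definition seq_exp :: "nat \<Rightarrow> real" where "seq_exp n = ln (a n) / ln (d n)"

lemma eventually_d_less: "c > 0 \<Longrightarrow> eventually (\<lambda>n. d n < c) sequentially"
  using order_tendstoD(2)[OF d_tendsto_0] by auto

lemma filterlim_d_at_right_0: "filterlim d (at_right 0) sequentially"
  by (rule tendsto_imp_filterlim_at_right[OF d_tendsto_0]) (simp add: d_pos)

lemma a_pos: "a n > 0"
proof -
  obtain K where K: "\<forall>k\<ge>K. \<exists>m. d m \<le> (1/2)^k \<and> b ((1/2)^k) \<le> (2 powr 1)^k * a m"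
    using dyadic_control[of 1] by auto
  obtain k0 where k0: "(1/2::real)^k0 < d n" using real_arch_pow_inv[of "d n" "1/2"] d_pos by auto
  define k where "k = max K k0"
  have "(1/2::real)^k \<le> (1/2)^k0" unfolding k_def by (rule power_decreasing) auto
  then have kd: "(1/2::real)^k < d n" using k0 by linarith
  have "K \<le> k" unfolding k_def by simp
  then obtain m where m: "d m \<le> (1/2)^k" "b ((1/2)^k) \<le> (2 powr 1)^k * a m"
    using K by blast
  have "n \<le> m"
  proof (rule ccontr)
    assume "\<not> n \<le> m" then have "d n \<le> d m" using d_antimono by simp
    then show False using m kd by simp
  qed
  moreover have "(2 powr 1)^k * a m > 0" using m(2) b_pos[of "(1/2)^k"] by simp
  then have "a m > 0" by (simp add: zero_less_mult_iff)
  ultimately show "a n > 0" using a_antimono by (meson less_le_trans)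
qed

lemma d_crossing:
  assumes r: "0 < r" "r < d N"
  obtains p where "p \<ge> N" "d (Suc p) \<le> r" "r < d p"
proof -
  obtain n0 where "d n0 < r" using eventually_d_less[OF r(1)] by (auto simp: eventually_sequentially)
  define n where "n = (LEAST n. d n \<le> r)"
  have dn: "d n \<le> r" unfolding n_def by (rule LeastI[of _ n0]) (use \<open>d n0 < r\<close> in simp)
  have "n > N"
  proof (rule ccontr)
    assume "\<not> n > N" then have "d N \<le> d n" using d_antimono by simp
    then show False using dn r by simp
  qed
  then obtain p where p: "n = Suc p" "p \<ge> N" by (cases n) auto
  have "\<not> d p \<le> r" unfolding n_def by (rule not_less_Least) (use p n_def in auto)
  then show thesis using that p dn by simp
qed

lemma eventually_ball_exp_gt_neg: "c < 0 \<Longrightarrow> eventually (\<lambda>r. c < ball_exp r) (at_right 0)"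
proof -
  assume c: "c < 0"
  have "eventually (\<lambda>r. c < ln (b 1) / ln r) (at_right 0)"
    using order_tendstoD(1)[OF tendsto_const_divide_ln_at_right_0[of "ln (b 1)"]] c by auto
  moreover have "eventually (\<lambda>r. r \<in> {0<..<1}) (at_right (0::real))"
    by (rule eventually_at_right_real) simp
  ultimately show ?thesis
  proof eventually_elim
    case (elim r)
    then have r: "0 < r" "r < 1" by auto
    have "ln (b r) \<le> ln (b 1)" using b_mono[of r 1] b_pos[of r] r by simp
    then have "ln (b 1) / ln r \<le> ln (b r) / ln r" using r by (simp add: divide_right_mono_neg)
    then show ?case using elim unfolding ball_exp_def by simp
  qed
qed

lemma ball_exp_ge_shifted:
  assumes r: "0 < r" "r < 1" and k: "real k * ln 2 \<le> - ln r" and \<eta>: "\<eta> \<ge> 0"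
    and bound: "b r \<le> (2 powr \<eta>)^k * a m"
  shows "ln (a m) / ln r - \<eta> \<le> ball_exp r"
proof -
  have lr: "ln r < 0" using r by simp
  have "ln (b r) \<le> ln ((2 powr \<eta>)^k * a m)"
    using bound b_pos[OF r(1)] a_pos[of m] by (subst ln_le_cancel_iff) auto
  also have "\<dots> = real k * (\<eta> * ln 2) + ln (a m)" using a_pos[of m] by (simp add: ln_mult ln_powr_two_power)
  finally have "(real k * (\<eta> * ln 2) + ln (a m)) / ln r \<le> ball_exp r"
    unfolding ball_exp_def using lr by (intro divide_right_mono_neg) auto
  moreover have "(real k * (\<eta> * ln 2) + ln (a m)) / ln r = \<eta> * (real k * ln 2 / ln r) + ln (a m) / ln r"
    by (simp add: add_divide_distrib)
  moreover have "-1 \<le> real k * ln 2 / ln r" using k lr by (simp add: le_divide_eq)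
  then have "- \<eta> \<le> \<eta> * (real k * ln 2 / ln r)" using \<eta> mult_left_mono by fastforce
  ultimately show ?thesis by linarith
qed

lemma ball_exp_eventually_less:
  assumes ev: "eventually (\<lambda>n. seq_exp n < y') sequentially" and yy: "y' < y"
  shows "eventually (\<lambda>r. ball_exp r < y) (at_right 0)"
proof -
  define \<epsilon> where "\<epsilon> = (y - y') / (2 * (\<bar>y'\<bar> + 1))"
  have \<epsilon>: "\<epsilon> > 0" using yy unfolding \<epsilon>_def by (simp add: field_simps)
  have \<epsilon>2: "\<bar>y'\<bar> * \<epsilon> < y - y'"
  proof -
    have "\<bar>y'\<bar> * \<epsilon> = (y - y') * (\<bar>y'\<bar> / (2 * (\<bar>y'\<bar> + 1)))" unfolding \<epsilon>_def by simp
    also have "\<dots> < (y - y') * 1"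
      by (rule mult_strict_left_mono) (use yy in \<open>auto simp: field_simps\<close>)
    finally show ?thesis by simp
  qed
  obtain N1 where N1: "\<And>n. n \<ge> N1 \<Longrightarrow> seq_exp n < y'" using ev by (auto simp: eventually_sequentially)
  obtain N2 where N2: "\<And>n. n \<ge> N2 \<Longrightarrow> ln (d (Suc n)) \<ge> (1+\<epsilon>) * ln (d n)"
    using ln_d_ratio[OF \<epsilon>] by (auto simp: eventually_sequentially)
  obtain N3 where N3: "\<And>n. n \<ge> N3 \<Longrightarrow> d n < 1" using eventually_d_less[of 1] by (auto simp: eventually_sequentially)
  define N where "N = max N1 (max N2 N3)"
  have "\<forall>r>0. r < d N \<longrightarrow> ball_exp r < y"
  proof (intro allI impI)
    fix r :: real assume r: "r > 0" "r < d N"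
    have "N3 \<le> N" unfolding N_def by simp
    then have rl: "r < 1" using r N3[of N] by linarith
    obtain p where p: "p \<ge> N" "d (Suc p) \<le> r" "r < d p" using d_crossing[OF r] .
    define n where "n = Suc p"
    have dn: "d n \<le> r" and nN: "n > N" using p unfolding n_def by auto
    have lr: "ln r < 0" using r rl by simp
    have l1: "ln (d n) \<le> ln r" using dn d_pos[of n] r by simp
    have l2: "ln r < ln (d p)" using p(3) r by simp
    have l3: "ln (d n) \<ge> (1+\<epsilon>) * ln (d p)" using N2[of p] p(1) unfolding N_def n_def by simp
    have Rn: "seq_exp n < y'" using N1[of n] nN unfolding N_def by simp
    have abn: "ln (a n) \<le> ln (b r)" using a_le_b[OF dn] a_pos[of n] by simp
    have fr: "ball_exp r \<le> ln (a n) / ln r" unfolding ball_exp_def using abn lr by (simp add: divide_right_mono_neg)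
    define t where "t = ln (d n) / ln r"
    have t1: "t \<ge> 1" unfolding t_def using l1 lr by (simp add: le_divide_eq)
    have "(1+\<epsilon>) * ln r \<le> (1+\<epsilon>) * ln (d p)" using l2 \<epsilon> by simp
    then have "ln (d n) \<ge> (1+\<epsilon>) * ln r" using l3 by linarith
    then have t2: "t \<le> 1 + \<epsilon>" unfolding t_def using lr by (simp add: divide_le_eq)
    have ldn: "ln (d n) \<noteq> 0" using l1 lr by simp
    have eq: "ln (a n) / ln r = seq_exp n * t" unfolding seq_exp_def t_def using ldn by simp
    have "seq_exp n * t < y"
    proof (cases "seq_exp n \<ge> 0")
      case True
      have "seq_exp n * t \<le> seq_exp n * (1+\<epsilon>)" using True t2 by (simp add: mult_left_mono)
      also have "\<dots> = seq_exp n + seq_exp n * \<epsilon>" by (simp add: algebra_simps)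
      also have "\<dots> \<le> seq_exp n + \<bar>y'\<bar> * \<epsilon>"
        using True Rn \<epsilon> by (intro add_left_mono mult_right_mono) auto
      finally show ?thesis using \<epsilon>2 Rn by linarith
    next
      case False
      have "seq_exp n * t \<le> seq_exp n * 1" using False t1 by (intro mult_left_mono_neg) auto
      then show ?thesis using Rn yy by simp
    qed
    then show "ball_exp r < y" using fr eq by simp
  qed
  then show ?thesis unfolding eventually_at_right_field using d_pos[of N] by blast
qed

lemma seq_exp_eventually_greater:
  assumes ev: "eventually (\<lambda>r. y' < ball_exp r) (at_right 0)" and yy: "y < y'"
  shows "eventually (\<lambda>n. y < seq_exp n) sequentially"
proof -
  have "eventually (\<lambda>n. y' < ball_exp (d n)) sequentially"
    using filterlim_iff[THEN iffD1, OF filterlim_d_at_right_0] ev by blast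
  moreover have "eventually (\<lambda>n. d n < 1) sequentially" by (rule eventually_d_less) simp
  ultimately show ?thesis
  proof eventually_elim
    case (elim n)
    have lr: "ln (d n) < 0" using elim d_pos[of n] by simp
    have "ln (a n) \<le> ln (b (d n))" using a_le_b[of n "d n"] a_pos[of n] by simp
    then have "ball_exp (d n) \<le> seq_exp n" unfolding ball_exp_def seq_exp_def using lr by (simp add: divide_right_mono_neg)
    then show ?case using elim yy by simp
  qed
qed

lemma seq_exp_eventually_less:
  assumes ev: "eventually (\<lambda>r. ball_exp r < y') (at_right 0)" and yy: "y' < y"
  shows "eventually (\<lambda>n. seq_exp n < y) sequentially"
proof -
  have y'0: "y' \<ge> 0"
  proof (rule ccontr)
    assume "\<not> y' \<ge> 0"
    then have "eventually (\<lambda>r. y' < ball_exp r) (at_right 0)" using eventually_ball_exp_gt_neg by simp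
    with ev have "eventually (\<lambda>r. False) (at_right (0::real))"
      by eventually_elim simp
    then show False by simp
  qed
  define \<eta> where "\<eta> = (y - y') / 4"
  have \<eta>: "\<eta> > 0" using yy unfolding \<eta>_def by simp
  obtain K1 where K1: "\<And>k. k \<ge> K1 \<Longrightarrow> \<exists>m. d m \<le> (1/2)^k \<and> b ((1/2)^k) \<le> (2 powr \<eta>)^k * a m"
    using dyadic_control[OF \<eta>] by blast
  obtain r0 where r0: "r0 > 0" "\<And>r. r > 0 \<Longrightarrow> r < r0 \<Longrightarrow> ball_exp r < y'"
    using ev unfolding eventually_at_right_field by auto
  define K2 where "K2 = nat \<lceil>y / (y - y' - \<eta>)\<rceil>"
  define K where "K = max K1 K2"
  define c where "c = min (min r0 1) ((1/2::real)^K)"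
  have c: "c > 0" using r0 unfolding c_def by simp
  show ?thesis using eventually_d_less[OF c]
  proof eventually_elim
    case (elim n)
    have dn: "d n < 1" "d n < r0" "d n < (1/2)^K" using elim unfolding c_def by auto
    obtain k where k: "k \<ge> 1" "(1/2)^k < d n" "d n \<le> (1/2)^(k-1)"
      using dyadic_bracket[OF d_pos[of n] dn(1)] by blast
    have kK: "k > K"
    proof (rule ccontr)
      assume "\<not> k > K"
      then have "(1/2::real)^K \<le> (1/2)^k" by (intro power_decreasing) auto
      then show False using k(2) dn(3) by linarith
    qed
    define \<rho> where "\<rho> = (1/2::real)^k"
    have \<rho>: "\<rho> > 0" "\<rho> < r0" "\<rho> < 1" using k dn unfolding \<rho>_def by auto
    obtain m where m: "d m \<le> \<rho>" "b \<rho> \<le> (2 powr \<eta>)^k * a m"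
      using K1[of k] kK unfolding K_def \<rho>_def by auto
    have "n \<le> m"
    proof (rule ccontr)
      assume "\<not> n \<le> m" then have "d n \<le> d m" using d_antimono by simp
      then show False using m k unfolding \<rho>_def by simp
    qed
    then have "b \<rho> \<le> (2 powr \<eta>)^k * a n"
      using m(2) a_antimono by (meson mult_left_mono order.trans powr_ge_zero zero_le_power)
    then have "ln (a n) / ln \<rho> - \<eta> \<le> ball_exp \<rho>"
      using \<rho> \<eta> by (intro ball_exp_ge_shifted) (auto simp: \<rho>_def ln_half_power)
    with r0(2)[OF \<rho>(1,2)] have A: "ln (a n) / ln \<rho> < y' + \<eta>" by simp
    define t where "t = ln (d n) / ln \<rho>"
    have eq: "ln (a n) / ln \<rho> = seq_exp n * t"
      unfolding seq_exp_def t_def using dn(1) d_pos[of n] by simp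
    have t1: "real (k-1) / real k \<le> t"
      unfolding t_def \<rho>_def using d_pos[of n] k(3) \<rho>(3) by (intro ln_quotient_ge_dyadic) (auto simp: \<rho>_def)
    show "seq_exp n < y"
    proof (rule ccontr)
      assume "\<not> seq_exp n < y"
      then have Ry: "seq_exp n \<ge> y" and R0: "seq_exp n > 0" using y'0 yy by auto
      have kpos: "real k > 0" using k by simp
      have "y * (real (k-1) / real k) \<le> seq_exp n * (real (k-1) / real k)"
        using Ry by (intro mult_right_mono) auto
      also have "\<dots> \<le> seq_exp n * t" using R0 t1 by (intro mult_left_mono) auto
      also have "\<dots> < y' + \<eta>" using A eq by simp
      finally have "y * real (k-1) < (y' + \<eta>) * real k" using kpos by (simp add: field_simps)
      moreover have "real (k-1) = real k - 1" using k by simp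
      ultimately have "real k * (y - y' - \<eta>) < y" by (simp add: algebra_simps)
      moreover have "y - y' - \<eta> > 0" using yy unfolding \<eta>_def by simp
      ultimately have "real k < y / (y - y' - \<eta>)" by (simp add: field_simps)
      moreover have "real K2 \<ge> y / (y - y' - \<eta>)" unfolding K2_def by linarith
      moreover have "K2 < k" using kK unfolding K_def by simp
      ultimately show False by linarith
    qed
  qed
qed

lemma ball_exp_eventually_greater:
  assumes ev: "eventually (\<lambda>n. y' < seq_exp n) sequentially" and yy: "y < y'"
  shows "eventually (\<lambda>r. y < ball_exp r) (at_right 0)"
proof (cases "y < 0")
  case True then show ?thesis using eventually_ball_exp_gt_neg by simp
next
  case False
  then have y'0: "y' > 0" using yy by simp
  define \<eta> where "\<eta> = (y' - y) / 4"
  have \<eta>: "\<eta> > 0" using yy unfolding \<eta>_def by simp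
  obtain K1 where K1: "\<And>k. k \<ge> K1 \<Longrightarrow> \<exists>m. d m \<le> (1/2)^k \<and> b ((1/2)^k) \<le> (2 powr \<eta>)^k * a m"
    using dyadic_control[OF \<eta>] by blast
  obtain N where N: "\<And>n. n \<ge> N \<Longrightarrow> y' < seq_exp n" using ev by (auto simp: eventually_sequentially)
  obtain K3 where K3: "(1/2::real)^K3 < d N" using real_arch_pow_inv[of "d N" "1/2"] d_pos[of N] by auto
  define K2 where "K2 = nat \<lceil>2 * y' / (y' - y)\<rceil>"
  define K where "K = Suc (max K1 (max K2 K3))"
  have "\<forall>r>0. r < (1/2)^K \<longrightarrow> y < ball_exp r"
  proof (intro allI impI)
    fix r :: real assume r: "r > 0" "r < (1/2)^K"
    have "(1/2::real)^K \<le> 1" by (simp add: power_le_one)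
    then have r1: "r < 1" using r(2) by linarith
    obtain k' where k': "k' \<ge> 1" "(1/2)^k' < r" "r \<le> (1/2)^(k'-1)" using dyadic_bracket[OF r(1) r1] by blast
    define k where "k = k' - 1"
    have k: "(1/2)^(Suc k) < r" "r \<le> (1/2)^k" using k' unfolding k_def by auto
    have "Suc k > K"
    proof (rule ccontr)
      assume "\<not> Suc k > K"
      then have "(1/2::real)^K \<le> (1/2)^(Suc k)" by (intro power_decreasing) auto
      then show False using k(1) r(2) by linarith
    qed
    then have kK: "K1 \<le> k" "K2 \<le> k" "K3 \<le> k" "1 \<le> k" unfolding K_def by auto
    obtain m where m: "d m \<le> (1/2)^k" "b ((1/2)^k) \<le> (2 powr \<eta>)^k * a m" using K1 kK(1) by blast
    have "(1/2::real)^k \<le> (1/2)^K3" using kK(3) by (rule power_decreasing) simp_all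
    then have "N \<le> m"
      using m(1) K3 d_antimono[of m N] by (metis linorder_not_le less_imp_le order.trans not_le)
    then have Rm: "y' < seq_exp m" using N by blast
    have "b r \<le> (2 powr \<eta>)^k * a m" using b_mono[OF r(1) k(2)] m(2) by simp
    moreover have "real k * ln 2 \<le> - ln r"
      using r k(2) ln_le_cancel_iff[of r "(1/2)^k"] by (simp add: ln_half_power)
    ultimately have F: "ln (a m) / ln r - \<eta> \<le> ball_exp r"
      using r r1 \<eta> by (intro ball_exp_ge_shifted) auto
    define t where "t = ln (d m) / ln r"
    have eq: "ln (a m) / ln r = seq_exp m * t"
    proof -
      have "(1/2::real)^k < 1" using kK(4) by (simp add: power_less_one_iff)
      then have "ln (d m) \<noteq> 0" using d_pos[of m] m(1) by simp
      then show ?thesis unfolding seq_exp_def t_def by simp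
    qed
    have t1: "real k / real (Suc k) \<le> t"
      unfolding t_def using d_pos[of m] m(1) r1 k(1) by (intro ln_quotient_ge_dyadic) auto
    have "2 * y' / (y' - y) \<le> real K2" unfolding K2_def by linarith
    then have "2 * y' / (y' - y) \<le> real (Suc k)" using kK(2) by linarith
    then have "2 * y' \<le> real (Suc k) * (y' - y)" using yy by (simp add: divide_le_eq)
    then have q: "y' / real (Suc k) \<le> (y' - y) / 2" by (simp add: divide_le_eq field_simps)
    have "y' * (real k / real (Suc k)) = y' - y' / real (Suc k)" by (simp add: field_simps)
    moreover have "y' * (real k / real (Suc k)) \<le> seq_exp m * t"
      by (rule mult_mono) (use Rm t1 y'0 in auto)
    ultimately have "y' - (y' - y)/2 \<le> seq_exp m * t" using q by linarith
    then show "y < ball_exp r" using F eq unfolding \<eta>_def using yy by (simp add: field_simps)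
  qed
  then show ?thesis unfolding eventually_at_right_field by (intro exI[of _ "(1/2)^K"]) auto
qed

lemma Limsup_ball_exp: "Limsup (at_right 0) (\<lambda>r. ereal (ball_exp r)) = limsup (\<lambda>n. ereal (seq_exp n))"
proof (rule antisym)
  show "Limsup (at_right 0) (\<lambda>r. ereal (ball_exp r)) \<le> limsup (\<lambda>n. ereal (seq_exp n))"
    unfolding Limsup_le_iff
  proof (intro allI impI)
    fix y assume y: "y > limsup (\<lambda>n. ereal (seq_exp n))"
    show "\<forall>\<^sub>F r in at_right 0. ereal (ball_exp r) < y"
    proof (cases y)
      case (real yr)
      obtain z where z: "limsup (\<lambda>n. ereal (seq_exp n)) < ereal z" "ereal z < y" using ereal_dense2[OF y] by blast
      have "\<forall>\<^sub>F n in sequentially. ereal (seq_exp n) < ereal z"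
        using Limsup_le_iff[THEN iffD1, OF order_refl] z(1) by blast
      then have "\<forall>\<^sub>F n in sequentially. seq_exp n < z" by simp
      from ball_exp_eventually_less[OF this, of yr] z(2) real show ?thesis by (simp add: eventually_mono)
    qed (use y in auto)
  qed
  show "limsup (\<lambda>n. ereal (seq_exp n)) \<le> Limsup (at_right 0) (\<lambda>r. ereal (ball_exp r))"
    unfolding Limsup_le_iff
  proof (intro allI impI)
    fix y assume y: "y > Limsup (at_right 0) (\<lambda>r. ereal (ball_exp r))"
    show "\<forall>\<^sub>F n in sequentially. ereal (seq_exp n) < y"
    proof (cases y)
      case (real yr)
      obtain z where z: "Limsup (at_right 0) (\<lambda>r. ereal (ball_exp r)) < ereal z" "ereal z < y" using ereal_dense2[OF y] by blast
      have "\<forall>\<^sub>F r in at_right 0. ereal (ball_exp r) < ereal z"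
        using Limsup_le_iff[THEN iffD1, OF order_refl] z(1) by blast
      then have "\<forall>\<^sub>F r in at_right 0. ball_exp r < z" by simp
      from seq_exp_eventually_less[OF this, of yr] z(2) real show ?thesis by (simp add: eventually_mono)
    qed (use y in auto)
  qed
qed

lemma Liminf_ball_exp: "Liminf (at_right 0) (\<lambda>r. ereal (ball_exp r)) = liminf (\<lambda>n. ereal (seq_exp n))"
proof (rule antisym)
  show "liminf (\<lambda>n. ereal (seq_exp n)) \<le> Liminf (at_right 0) (\<lambda>r. ereal (ball_exp r))"
    unfolding le_Liminf_iff
  proof (intro allI impI)
    fix y assume y: "y < liminf (\<lambda>n. ereal (seq_exp n))"
    show "\<forall>\<^sub>F r in at_right 0. y < ereal (ball_exp r)"
    proof (cases y)
      case (real yr)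
      obtain z where z: "y < ereal z" "ereal z < liminf (\<lambda>n. ereal (seq_exp n))" using ereal_dense2[OF y] by blast
      have "\<forall>\<^sub>F n in sequentially. ereal z < ereal (seq_exp n)"
        using le_Liminf_iff[THEN iffD1, OF order_refl] z(2) by blast
      then have "\<forall>\<^sub>F n in sequentially. z < seq_exp n" by simp
      from ball_exp_eventually_greater[OF this, of yr] z(1) real show ?thesis by (simp add: eventually_mono)
    qed (use y in auto)
  qed
  show "Liminf (at_right 0) (\<lambda>r. ereal (ball_exp r)) \<le> liminf (\<lambda>n. ereal (seq_exp n))"
    unfolding le_Liminf_iff
  proof (intro allI impI)
    fix y assume y: "y < Liminf (at_right 0) (\<lambda>r. ereal (ball_exp r))"
    show "\<forall>\<^sub>F n in sequentially. y < ereal (seq_exp n)"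
    proof (cases y)
      case (real yr)
      obtain z where z: "y < ereal z" "ereal z < Liminf (at_right 0) (\<lambda>r. ereal (ball_exp r))" using ereal_dense2[OF y] by blast
      have "\<forall>\<^sub>F r in at_right 0. ereal z < ereal (ball_exp r)"
        using le_Liminf_iff[THEN iffD1, OF order_refl] z(2) by blast
      then have "\<forall>\<^sub>F r in at_right 0. z < ball_exp r" by simp
      from seq_exp_eventually_greater[OF this, of yr] z(1) real show ?thesis by (simp add: eventually_mono)
    qed (use y in auto)
  qed
qed

end

section \<open>Doubling spaces and outer measures\<close>

lemma doubling_cover_iterate:
  fixes x :: "'a::metric_space"
  assumes doubling: "\<And>(x::'a) r. r > 0 \<Longrightarrow>
      \<exists>F. finite F \<and> card F \<le> N \<and> cball x r \<subseteq> (\<Union>y\<in>F. cball y (r/2))"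
    and r: "r > 0"
  shows "\<exists>F. finite F \<and> card F \<le> N^j \<and> cball x r \<subseteq> (\<Union>y\<in>F. cball y (r/2^j))"
proof (induction j)
  case 0 then show ?case by (intro exI[of _ "{x}"]) auto
next
  case (Suc j)
  then obtain F where F: "finite F" "card F \<le> N^j" "cball x r \<subseteq> (\<Union>y\<in>F. cball y (r/2^j))" by blast
  have "\<forall>y::'a. \<exists>G. finite G \<and> card G \<le> N \<and> cball y (r/2^j) \<subseteq> (\<Union>g\<in>G. cball g (r/2^j/2))"
  proof
    fix y :: 'a
    show "\<exists>G. finite G \<and> card G \<le> N \<and> cball y (r/2^j) \<subseteq> (\<Union>g\<in>G. cball g (r/2^j/2))"
      using doubling[of "r/2^j" y] r by simp
  qed
  then obtain G where G: "\<And>y::'a. finite (G y) \<and> card (G y) \<le> N \<and> cball y (r/2^j) \<subseteq> (\<Union>g\<in>G y. cball g (r/2^j/2))"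
    by metis
  define F' where "F' = (\<Union>y\<in>F. G y)"
  have "finite F'" unfolding F'_def using F G by auto
  moreover have "card F' \<le> N^(Suc j)"
  proof -
    have "card F' \<le> (\<Sum>y\<in>F. card (G y))" unfolding F'_def using F(1) by (rule card_UN_le)
    also have "\<dots> \<le> card F * N" using G sum_bounded_above[of F "\<lambda>y. card (G y)" N] by simp
    also have "\<dots> \<le> N^j * N" using F(2) by simp
    finally show ?thesis by (simp add: mult.commute)
  qed
  moreover have "cball x r \<subseteq> (\<Union>y\<in>F'. cball y (r/2^(Suc j)))"
  proof
    fix z assume "z \<in> cball x r"
    then obtain y where y: "y \<in> F" "z \<in> cball y (r/2^j)" using F(3) by blast
    then obtain g where "g \<in> G y" "z \<in> cball g (r/2^j/2)" using G[of y] by blast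
    then show "z \<in> (\<Union>y\<in>F'. cball y (r/2^(Suc j)))" unfolding F'_def using y by (auto simp: field_simps)
  qed
  ultimately show ?case by blast
qed

lemma doubling_packing:
  fixes x :: "'a::metric_space"
  assumes doubling: "\<And>(x::'a) r. r > 0 \<Longrightarrow>
      \<exists>F. finite F \<and> card F \<le> N \<and> cball x r \<subseteq> (\<Union>y\<in>F. cball y (r/2))"
    and P: "P \<subseteq> cball x R" and R: "R > 0"
    and sep: "\<And>p q. p \<in> P \<Longrightarrow> q \<in> P \<Longrightarrow> p \<noteq> q \<Longrightarrow> dist p q > t"
    and j: "R / 2^j \<le> t / 2"
  shows "finite P \<and> card P \<le> N^j"
proof -
  obtain F where F: "finite F" "card F \<le> N^j" "cball x R \<subseteq> (\<Union>y\<in>F. cball y (R/2^j))"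
    using doubling_cover_iterate[OF doubling R] by blast
  have "\<forall>p\<in>P. \<exists>g. g \<in> F \<and> p \<in> cball g (R/2^j)" using P F(3) by blast
  then obtain \<phi> where "\<forall>p\<in>P. \<phi> p \<in> F \<and> p \<in> cball (\<phi> p) (R/2^j)"
    by (auto dest: bchoice)
  then have \<phi>: "\<And>p. p \<in> P \<Longrightarrow> \<phi> p \<in> F \<and> p \<in> cball (\<phi> p) (R/2^j)" by blast
  have inj: "inj_on \<phi> P"
  proof (rule inj_onI)
    fix p q assume pq: "p \<in> P" "q \<in> P" "\<phi> p = \<phi> q"
    have "dist p q \<le> dist p (\<phi> p) + dist q (\<phi> q)"
      using dist_triangle[of p q "\<phi> p"] pq(3) by (simp add: dist_commute)
    also have "\<dots> \<le> t"
    proof -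
      have "dist p (\<phi> p) \<le> R/2^j" "dist q (\<phi> q) \<le> R/2^j"
        using \<phi>[OF pq(1)] \<phi>[OF pq(2)] by (auto simp: dist_commute)
      then show ?thesis using j by linarith
    qed
    finally show "p = q" using sep[OF pq(1,2)] by force
  qed
  have img: "\<phi> ` P \<subseteq> F" using \<phi> by auto
  then have "finite P" using F(1) inj finite_imageD finite_subset by blast
  moreover have "card P \<le> card F" using card_inj_on_le[OF inj img F(1)] .
  ultimately show ?thesis using F(2) by simp
qed

lemma om_mono: "outer_measure \<mu> \<Longrightarrow> A \<subseteq> B \<Longrightarrow> \<mu> A \<le> \<mu> B"
  by (simp add: outer_measure_def)

lemma om_countable_subadditive: "outer_measure \<mu> \<Longrightarrow> \<mu> (\<Union>n. A n) \<le> (\<Sum>n. \<mu> (A n))"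
  by (simp add: outer_measure_def)

lemma om_empty: "outer_measure \<mu> \<Longrightarrow> \<mu> {} = 0"
  by (simp add: outer_measure_def)

lemma om_Un_le:
  assumes "outer_measure \<mu>"
  shows "\<mu> (A \<union> B) \<le> \<mu> A + \<mu> B"
proof -
  define X where "X n = (if n = 0 then A else if n = 1 then B else {})" for n :: nat
  have "(\<Union>n. X n) = A \<union> B"
  proof
    show "(\<Union>n. X n) \<subseteq> A \<union> B" unfolding X_def by auto
    show "A \<union> B \<subseteq> (\<Union>n. X n)" using UN_I[of 0 UNIV _ X] UN_I[of 1 UNIV _ X] by (auto simp: X_def)
  qed
  moreover have "(\<Sum>n. \<mu> (X n)) = (\<Sum>n\<in>{0,1}. \<mu> (X n))"
    by (rule suminf_finite) (auto simp: X_def om_empty[OF assms])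
  ultimately show ?thesis
    using om_countable_subadditive[OF assms, of X] by (simp add: X_def)
qed

lemma om_UN_finite_le:
  assumes "outer_measure \<mu>" "finite F"
  shows "\<mu> (\<Union>i\<in>F. X i) \<le> (\<Sum>i\<in>F. \<mu> (X i))"
  using assms(2)
proof (induction F rule: finite_induct)
  case empty then show ?case by (simp add: om_empty[OF assms(1)])
next
  case (insert a F)
  have "\<mu> (\<Union>i\<in>insert a F. X i) \<le> \<mu> (X a) + \<mu> (\<Union>i\<in>F. X i)"
    using om_Un_le[OF assms(1)] by simp
  also have "\<dots> \<le> \<mu> (X a) + (\<Sum>i\<in>F. \<mu> (X i))" using insert by (intro add_left_mono) auto
  finally show ?case using insert by simp
qed

lemma om_sum_disjoint:
  assumes "outer_measure \<mu>" "finite F" "\<And>i. i \<in> F \<Longrightarrow> om_measurable \<mu> (X i)"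
    "\<And>i j. i \<in> F \<Longrightarrow> j \<in> F \<Longrightarrow> i \<noteq> j \<Longrightarrow> X i \<inter> X j = {}"
  shows "(\<Sum>i\<in>F. \<mu> (X i)) = \<mu> (\<Union>i\<in>F. X i)"
  using assms(2-)
proof (induction F rule: finite_induct)
  case empty then show ?case by (simp add: om_empty[OF assms(1)])
next
  case (insert a F)
  let ?U = "\<Union>i\<in>F. X i"
  have disj: "?U \<inter> X a = {}" using insert.prems(2) insert.hyps(2) by fastforce
  have "\<mu> (X a \<union> ?U) = \<mu> ((X a \<union> ?U) \<inter> X a) + \<mu> ((X a \<union> ?U) - X a)"
    using insert.prems(1)[of a] unfolding om_measurable_def by blast
  also have "(X a \<union> ?U) \<inter> X a = X a" by auto
  also have "(X a \<union> ?U) - X a = ?U" using disj by auto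
  finally have "\<mu> (X a \<union> ?U) = \<mu> (X a) + \<mu> ?U" .
  moreover have "(\<Sum>i\<in>F. \<mu> (X i)) = \<mu> ?U" using insert by auto
  ultimately show ?case using insert.hyps by simp
qed

text \<open>Doubling makes bounded sets totally bounded, so the complement of the support is
  covered by countably many null balls.\<close>

lemma om_null_outside_support:
  fixes K :: "'a::metric_space set"
  assumes \<mu>: "outer_measure \<mu>"
    and doubling: "\<And>(x::'a) r. r > 0 \<Longrightarrow>
      \<exists>F. finite F \<and> card F \<le> N \<and> cball x r \<subseteq> (\<Union>y\<in>F. cball y (r/2))"
    and K: "bounded K"
  shows "\<mu> (K - support \<mu>) = 0"
proof -
  obtain x0 e where e: "K \<subseteq> cball x0 e" "0 \<le> e"
    using K unfolding bounded_subset_cball by blast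
  define R where "R = e + 1"
  have R: "R > 0" "K \<subseteq> cball x0 R" using e unfolding R_def by auto
  obtain F where F: "\<And>j. finite (F j) \<and> cball x0 R \<subseteq> (\<Union>y\<in>F j. cball y (R/2^j))"
    using doubling_cover_iterate[OF doubling R(1), where x=x0] by metis
  define null_balls where
    "null_balls j = (\<Union>c\<in>{c\<in>F j. \<mu> (cball c (R/2^j)) = 0}. cball c (R/2^j))" for j
  have null: "\<mu> (null_balls j) = 0" for j
  proof -
    have "\<mu> (null_balls j) \<le> (\<Sum>c\<in>{c\<in>F j. \<mu> (cball c (R/2^j)) = 0}. \<mu> (cball c (R/2^j)))"
      unfolding null_balls_def using F[of j] by (intro om_UN_finite_le[OF \<mu>]) auto
    then show ?thesis by simp
  qed
  have "K - support \<mu> \<subseteq> (\<Union>j. null_balls j)"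
  proof
    fix z assume z: "z \<in> K - support \<mu>"
    then obtain r where r: "r > 0" "\<mu> (ball z r) = 0" unfolding support_def by (auto simp: not_gr_zero)
    obtain j where j: "(1/2::real)^j < r / (2*R)" using real_arch_pow_inv[of "r/(2*R)" "1/2"] r R by auto
    have j2: "2 * (R / 2^j) < r"
      using j R by (simp add: power_one_over field_simps)
    obtain c where c: "c \<in> F j" "z \<in> cball c (R/2^j)" using F[of j] z R by blast
    have "cball c (R/2^j) \<subseteq> ball z r"
    proof
      fix w assume "w \<in> cball c (R/2^j)"
      then show "w \<in> ball z r"
        using c j2 dist_triangle[of z w c] by (simp add: dist_commute)
    qed
    then have "\<mu> (cball c (R/2^j)) \<le> \<mu> (ball z r)" by (rule om_mono[OF \<mu>])
    then have "\<mu> (cball c (R/2^j)) = 0" using r(2) by simp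
    then show "z \<in> (\<Union>j. null_balls j)" unfolding null_balls_def using c by blast
  qed
  then have "\<mu> (K - support \<mu>) \<le> \<mu> (\<Union>j. null_balls j)" by (rule om_mono[OF \<mu>])
  also have "\<dots> \<le> (\<Sum>j. \<mu> (null_balls j))" by (rule om_countable_subadditive[OF \<mu>])
  finally show ?thesis using null by simp
qed

lemma om_limsup_null:
  assumes \<mu>: "outer_measure \<mu>"
    and bound: "\<And>k. k \<ge> K \<Longrightarrow> \<mu> (B k) \<le> ennreal (c k)"
    and c: "\<And>k. c k \<ge> 0" "summable c"
  shows "\<mu> {x. \<forall>K. \<exists>k\<ge>K. x \<in> B k} = 0"
proof -
  let ?Z = "{x. \<forall>K. \<exists>k\<ge>K. x \<in> B k}"
  have tail: "\<mu> ?Z \<le> ennreal (\<Sum>i. c (i + n))" if n: "n \<ge> K" for n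
  proof -
    have "?Z \<subseteq> (\<Union>i. B (i + n))"
    proof
      fix x assume "x \<in> ?Z"
      then obtain k where "k \<ge> n" "x \<in> B k" by blast
      then show "x \<in> (\<Union>i. B (i + n))" by (intro UN_I[of "k - n"]) auto
    qed
    then have "\<mu> ?Z \<le> \<mu> (\<Union>i. B (i + n))" by (rule om_mono[OF \<mu>])
    also have "\<dots> \<le> (\<Sum>i. \<mu> (B (i + n)))" by (rule om_countable_subadditive[OF \<mu>])
    also have "\<dots> \<le> (\<Sum>i. ennreal (c (i + n)))" using bound n by (intro suminf_le) auto
    also have "\<dots> = ennreal (\<Sum>i. c (i + n))"
      using c by (intro suminf_ennreal2) (auto simp: summable_iff_shift)
    finally show ?thesis .
  qed
  have "\<mu> ?Z \<le> 0"
  proof (rule ennreal_le_epsilon)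
    fix e :: real assume e: "0 < e"
    obtain n0 where n0: "\<And>n. n \<ge> n0 \<Longrightarrow> norm (\<Sum>i. c (i + n)) < e"
      using suminf_exist_split[OF e c(2)] by blast
    have "\<mu> ?Z \<le> ennreal (\<Sum>i. c (i + max K n0))" by (rule tail) simp
    also have "\<dots> \<le> ennreal e" using n0[of "max K n0"] by (intro ennreal_leI) auto
    finally show "\<mu> ?Z \<le> 0 + ennreal e" by simp
  qed
  then show ?thesis by simp
qed

section \<open>Moran constructions\<close>

lemma prefix_of_length[simp]: "length (prefix_of s n) = n"
  by (simp add: prefix_of_def)

lemma prefix_of_Suc: "prefix_of s (Suc n) = prefix_of s n @ [s n]"
  by (simp add: prefix_of_def)

lemma prefix_of_0[simp]: "prefix_of s 0 = []"
  by (simp add: prefix_of_def)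

lemma take_prefix_of: "take m (prefix_of s n) = prefix_of s (min m n)"
  by (cases "m \<le> n") (auto simp: prefix_of_def take_map min_def)

lemma butlast_prefix_of: "butlast (prefix_of s (Suc n)) = prefix_of s n"
  by (simp add: prefix_of_Suc)

lemma nth_prefix_of: "i < n \<Longrightarrow> prefix_of s n ! i = s i"
  by (simp add: prefix_of_def)

locale moran =
  fixes \<Sigma> :: "'i list set" and E :: "'i list \<Rightarrow> 'a::complete_space set"
  assumes moran: "moran_construction \<Sigma> E"
begin

lemma codetree_\<Sigma>: "codetree \<Sigma>" using moran by (simp add: moran_construction_def)

lemma root_in: "[] \<in> \<Sigma>" using codetree_\<Sigma> by (simp add: codetree_def)

lemma butlast_in: "w \<in> \<Sigma> \<Longrightarrow> butlast w \<in> \<Sigma>"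
  using codetree_\<Sigma> by (cases "w = []") (auto simp: codetree_def)

lemma offspring_finite_nonempty: "w \<in> \<Sigma> \<Longrightarrow> finite (offspring \<Sigma> w) \<and> offspring \<Sigma> w \<noteq> {}"
  using codetree_\<Sigma> by (simp add: codetree_def)

lemma compact_E: "w \<in> \<Sigma> \<Longrightarrow> compact (E w)" using moran by (simp add: moran_construction_def)

lemma diameter_pos: "w \<in> \<Sigma> \<Longrightarrow> diameter (E w) > 0" using moran by (simp add: moran_construction_def)

lemma E_butlast_subset: "w \<in> \<Sigma> \<Longrightarrow> w \<noteq> [] \<Longrightarrow> E w \<subseteq> E (butlast w)"
  using moran by (simp add: moran_construction_def)

lemma diameter_tendsto_0: "s \<in> infinite_words \<Sigma> \<Longrightarrow> (\<lambda>n. diameter (E (prefix_of s n))) \<longlonglongrightarrow> 0"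
  using moran by (simp add: moran_construction_def)

lemma E_siblings_disjoint: "w @ [a] \<in> \<Sigma> \<Longrightarrow> w @ [b] \<in> \<Sigma> \<Longrightarrow> a \<noteq> b \<Longrightarrow> E (w @ [a]) \<inter> E (w @ [b]) = {}"
  using moran by (simp add: moran_construction_def)

lemma inner_ball_exists: "\<exists>C0>0. \<forall>w \<in> \<Sigma>. \<exists>x \<in> E w. cball x (C0 * diameter (E w)) \<subseteq> E w"
  using moran by (simp add: moran_construction_def)

lemma diameter_ratio_children: "\<epsilon> > 0 \<Longrightarrow> \<exists>N. \<forall>s \<in> infinite_words \<Sigma>. \<forall>n \<ge> N.
        \<bar>ln (diameter (E (prefix_of s n))) /
           ln (Min (diameter ` E ` offspring \<Sigma> (prefix_of s n))) - 1\<bar> < \<epsilon>"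
  using moran by (simp add: moran_construction_def)

lemma E_nonempty: "w \<in> \<Sigma> \<Longrightarrow> E w \<noteq> {}" using diameter_pos[of w] by auto

lemma bounded_E: "w \<in> \<Sigma> \<Longrightarrow> bounded (E w)" using compact_E compact_imp_bounded by blast

lemma take_in: "w \<in> \<Sigma> \<Longrightarrow> take n w \<in> \<Sigma>"
proof (induction w rule: rev_induct)
  case Nil then show ?case by simp
next
  case (snoc x xs)
  have "xs \<in> \<Sigma>" using butlast_in[OF snoc.prems] by simp
  then show ?case using snoc by (cases "n \<le> length xs") auto
qed

lemma E_subset_take: "w \<in> \<Sigma> \<Longrightarrow> E w \<subseteq> E (take n w)"
proof (induction w rule: rev_induct)
  case Nil then show ?case by simp
next
  case (snoc x xs)
  have xs: "xs \<in> \<Sigma>" using butlast_in[OF snoc.prems] by simp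
  have "E (xs @ [x]) \<subseteq> E xs" using E_butlast_subset[OF snoc.prems] by simp
  then show ?case using snoc xs by (cases "n \<le> length xs") auto
qed

lemma E_disjoint_branch:
  assumes w: "w \<in> \<Sigma>" and v: "v \<in> \<Sigma>" and i: "i < length w" "i < length v"
    and t: "take i w = take i v" and d: "w ! i \<noteq> v ! i"
  shows "E w \<inter> E v = {}"
proof -
  have a: "take (Suc i) w = take i v @ [w ! i]" using i t by (simp add: take_Suc_conv_app_nth)
  have b: "take (Suc i) v = take i v @ [v ! i]" using i by (simp add: take_Suc_conv_app_nth)
  have "E (take i v @ [w ! i]) \<inter> E (take i v @ [v ! i]) = {}"
    using E_siblings_disjoint a b take_in[OF w] take_in[OF v] d by metis
  moreover have "E w \<subseteq> E (take i v @ [w ! i])" using E_subset_take[OF w, of "Suc i"] a by simp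
  moreover have "E v \<subseteq> E (take i v @ [v ! i])" using E_subset_take[OF v, of "Suc i"] b by simp
  ultimately show ?thesis by blast
qed

lemma common_point_prefix:
  assumes w: "w \<in> \<Sigma>" and v: "v \<in> \<Sigma>" and z: "z \<in> E w" "z \<in> E v" and le: "length w \<le> length v"
  shows "take (length w) v = w"
proof (rule ccontr)
  assume differ: "take (length w) v \<noteq> w"
  have "\<exists>i < length w. w ! i \<noteq> v ! i"
  proof (rule ccontr)
    assume "\<not> ?thesis"
    then have "take (length w) v = w" using le by (intro nth_equalityI) auto
    then show False using differ by simp
  qed
  then obtain i0 where i0: "i0 < length w \<and> w ! i0 \<noteq> v ! i0" by blast
  define i where "i = (LEAST i. i < length w \<and> w ! i \<noteq> v ! i)"
  have i: "i < length w" "w ! i \<noteq> v ! i" using LeastI[of "\<lambda>i. i < length w \<and> w ! i \<noteq> v ! i", OF i0]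
    unfolding i_def by auto
  have mi: "\<And>j. j < i \<Longrightarrow> w ! j = v ! j"
    using not_less_Least[of _ "\<lambda>i. i < length w \<and> w ! i \<noteq> v ! i"] i(1) unfolding i_def
    by (meson less_trans)
  have "take i w = take i v"
    using i(1) le mi by (intro nth_equalityI) auto
  then have "E w \<inter> E v = {}" using E_disjoint_branch[OF w v] i le by auto
  then show False using z by auto
qed

lemma finite_level: "finite {w \<in> \<Sigma>. length w = n}"
proof (induction n)
  case 0 then show ?case by (simp add: Collect_conj_eq)
next
  case (Suc n)
  have "{w \<in> \<Sigma>. length w = Suc n} \<subseteq> (\<Union>p\<in>{w \<in> \<Sigma>. length w = n}. offspring \<Sigma> p)"
  proof
    fix w assume w: "w \<in> {w \<in> \<Sigma>. length w = Suc n}"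
    then have "w \<noteq> []" by auto
    then have "w = butlast w @ [last w]" by simp
    moreover have "butlast w \<in> \<Sigma>" using butlast_in w by auto
    ultimately show "w \<in> (\<Union>p\<in>{w \<in> \<Sigma>. length w = n}. offspring \<Sigma> p)"
      using w unfolding offspring_def by (intro UN_I[of "butlast w"]) auto
  qed
  moreover have "finite (\<Union>p\<in>{w \<in> \<Sigma>. length w = n}. offspring \<Sigma> p)"
    using Suc offspring_finite_nonempty by auto
  ultimately show ?case by (rule finite_subset)
qed

lemma finite_levels_le: "finite {w \<in> \<Sigma>. length w \<le> n}"
proof -
  have "{w \<in> \<Sigma>. length w \<le> n} = (\<Union>m\<in>{..n}. {w \<in> \<Sigma>. length w = m})" by auto
  then show ?thesis using finite_level by simp
qed

lemma extend_to_infinite_word: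
  assumes w: "w \<in> \<Sigma>"
  shows "\<exists>s\<in>infinite_words \<Sigma>. prefix_of s (length w) = w"
proof -
  define ch where "ch p = (SOME v. v \<in> offspring \<Sigma> p)" for p
  have ch: "ch p \<in> offspring \<Sigma> p" if "p \<in> \<Sigma>" for p
    unfolding ch_def using offspring_finite_nonempty[OF that] by (metis ex_in_conv someI_ex)
  define W where "W n = (ch ^^ n) w" for n
  have W: "W n \<in> \<Sigma> \<and> length (W n) = length w + n" for n
  proof (induction n)
    case 0 then show ?case using w by (simp add: W_def)
  next
    case (Suc n)
    have "W (Suc n) = ch (W n)" by (simp add: W_def)
    then show ?case using ch[of "W n"] Suc unfolding offspring_def by auto
  qed
  have Ws: "\<exists>a. W (Suc n) = W n @ [a]" for n
  proof -
    have "W (Suc n) = ch (W n)" by (simp add: W_def)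
    then show ?thesis using ch[of "W n"] W[of n] unfolding offspring_def by auto
  qed
  have Wt: "m \<le> n \<Longrightarrow> take (length w + m) (W n) = W m" for m n
  proof (induction n)
    case 0 then show ?case using W[of 0] by simp
  next
    case (Suc n)
    show ?case
    proof (cases "m = Suc n")
      case True then show ?thesis using W[of "Suc n"] by simp
    next
      case False
      then have mn: "m \<le> n" using Suc by simp
      obtain a where a: "W (Suc n) = W n @ [a]" using Ws by blast
      have "take (length w + m) (W (Suc n)) = take (length w + m) (W n)"
        using a W[of n] mn by simp
      then show ?thesis using Suc.IH[OF mn] by simp
    qed
  qed
  define s where "s i = W (Suc i) ! i" for i
  have ps: "prefix_of s n = take n (W n)" for n
  proof (rule nth_equalityI)
    show "length (prefix_of s n) = length (take n (W n))" using W[of n] by simp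
    fix i assume i: "i < length (prefix_of s n)"
    then have i': "i < n" by simp
    have "W (Suc i) = take (length w + Suc i) (W n)" using Wt[of "Suc i" n] i' by simp
    then have "s i = W n ! i" unfolding s_def by simp
    then show "prefix_of s n ! i = take n (W n) ! i" using i' by (simp add: nth_prefix_of)
  qed
  have "s \<in> infinite_words \<Sigma>"
    unfolding infinite_words_def using ps take_in W by auto
  moreover have "prefix_of s (length w) = w"
    using ps[of "length w"] Wt[of 0 "length w"] by (simp add: W_def)
  ultimately show ?thesis by blast
qed

lemma prefix_in: "s \<in> infinite_words \<Sigma> \<Longrightarrow> prefix_of s n \<in> \<Sigma>"
  by (simp add: infinite_words_def)

lemma E_prefix_antimono: "s \<in> infinite_words \<Sigma> \<Longrightarrow> m \<le> n \<Longrightarrow> E (prefix_of s n) \<subseteq> E (prefix_of s m)"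
  using E_subset_take[OF prefix_in, of s n m] by (simp add: take_prefix_of min_def)

lemma diameter_prefix_antimono: "s \<in> infinite_words \<Sigma> \<Longrightarrow> m \<le> n \<Longrightarrow>
    diameter (E (prefix_of s n)) \<le> diameter (E (prefix_of s m))"
  using E_prefix_antimono bounded_E prefix_in diameter_subset by metis

lemma moran_point_in:
  assumes s: "s \<in> infinite_words \<Sigma>"
  shows "moran_point E s \<in> E (prefix_of s n)"
proof -
  let ?S = "\<lambda>n. E (prefix_of s n)"
  have closed_S: "\<And>n. closed (?S n)" using compact_E[OF prefix_in[OF s]] compact_imp_closed by blast
  have nonempty_S: "\<And>n. ?S n \<noteq> {}" using E_nonempty[OF prefix_in[OF s]] by blast
  have nested_S: "\<And>m n. m \<le> n \<Longrightarrow> ?S n \<subseteq> ?S m" using E_prefix_antimono[OF s] by blast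
  have small_S: "\<exists>n. \<forall>x\<in>?S n. \<forall>y\<in>?S n. dist x y < e" if e: "e > 0" for e :: real
  proof -
    obtain n where n: "diameter (?S n) < e"
      using order_tendstoD(2)[OF diameter_tendsto_0[OF s] e] by (auto simp: eventually_sequentially)
    show "\<exists>n. \<forall>x\<in>?S n. \<forall>y\<in>?S n. dist x y < e"
      using diameter_bounded_bound[OF bounded_E[OF prefix_in[OF s]]] n by (meson le_less_trans)
  qed
  obtain x where x: "\<And>n. x \<in> ?S n" using decreasing_closed_nest[of ?S, OF closed_S nonempty_S nested_S small_S] by blast
  have uniq: "y = x" if y: "\<And>n. y \<in> ?S n" for y
  proof (rule ccontr)
    assume "y \<noteq> x" then have "dist y x > 0" by simp
    then obtain n where n: "diameter (?S n) < dist y x"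
      using order_tendstoD(2)[OF diameter_tendsto_0[OF s], of "dist y x"] by (auto simp: eventually_sequentially)
    have "dist y x \<le> diameter (?S n)"
      using diameter_bounded_bound[OF bounded_E[OF prefix_in[OF s]] y x] .
    then show False using n by simp
  qed
  have "moran_point E s = x" unfolding moran_point_def
    by (rule the_equality) (use x uniq in auto)
  then show ?thesis using x by simp
qed

lemma E_prefix_subset_cball:
  assumes s: "s \<in> infinite_words \<Sigma>" and r: "diameter (E (prefix_of s n)) \<le> r"
  shows "E (prefix_of s n) \<subseteq> cball (moran_point E s) r"
proof
  fix y assume "y \<in> E (prefix_of s n)"
  then have "dist (moran_point E s) y \<le> diameter (E (prefix_of s n))"
    using diameter_bounded_bound[OF bounded_E[OF prefix_in[OF s]] moran_point_in[OF s]] by blast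
  then show "y \<in> cball (moran_point E s) r" using r by simp
qed

lemma limit_set_word:
  assumes z: "z \<in> limit_set \<Sigma> E"
  shows "\<exists>s\<in>infinite_words \<Sigma>. \<forall>n. z \<in> E (prefix_of s n)"
proof -
  have ex: "\<exists>w. w \<in> \<Sigma> \<and> length w = n \<and> z \<in> E w" for n
    using z unfolding limit_set_def level_def by blast
  define W where "W n = (SOME w. w \<in> \<Sigma> \<and> length w = n \<and> z \<in> E w)" for n
  have W: "W n \<in> \<Sigma> \<and> length (W n) = n \<and> z \<in> E (W n)" for n
    unfolding W_def using someI_ex[OF ex] .
  have Wt: "take n (W (Suc n)) = W n" for n
    using common_point_prefix[of "W n" "W (Suc n)" z] W[of n] W[of "Suc n"] by simp
  define s where "s i = W (Suc i) ! i" for i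
  have ps: "prefix_of s n = W n" for n
  proof (induction n)
    case 0 then show ?case using W[of 0] by simp
  next
    case (Suc n)
    have "W (Suc n) = take n (W (Suc n)) @ [W (Suc n) ! n]"
      using W[of "Suc n"] by (metis lessI take_Suc_conv_app_nth take_all order_refl)
    then show ?case using Suc Wt[of n] by (simp add: prefix_of_Suc s_def)
  qed
  have "s \<in> infinite_words \<Sigma>" unfolding infinite_words_def using ps W by simp
  moreover have "\<forall>n. z \<in> E (prefix_of s n)" using ps W by simp
  ultimately show ?thesis by blast
qed

text \<open>The words at which the cylinders along an address first reach diameter \<open>\<le> \<rho>\<close>; their
  cylinders are disjoint and every point of the limit set lies in one of them.\<close>
definition stopping :: "real \<Rightarrow> 'i list set" where
  "stopping \<rho> = {w \<in> \<Sigma>. w \<noteq> [] \<and> diameter (E w) \<le> \<rho> \<and> diameter (E (butlast w)) > \<rho>}"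

lemma stopping_disjoint_aux:
  assumes v: "v \<in> stopping \<rho>" and w: "w \<in> stopping \<rho>" and z: "z \<in> E v" "z \<in> E w" and le: "length v \<le> length w"
  shows "v = w"
proof -
  have vS: "v \<in> \<Sigma>" and wS: "w \<in> \<Sigma>" using v w by (auto simp: stopping_def)
  have t: "take (length v) w = v" using common_point_prefix[OF vS wS z le] .
  show ?thesis
  proof (cases "length v = length w")
    case True then show ?thesis using t by simp
  next
    case False
    then have lt: "length v < length w" using le by simp
    have "take (length v) (butlast w) = v" using t lt by (simp add: take_butlast)
    then have "E (butlast w) \<subseteq> E v" using E_subset_take[OF butlast_in[OF wS], of "length v"] by simp
    then have "diameter (E (butlast w)) \<le> diameter (E v)" using bounded_E[OF vS] by (rule diameter_subset)
    then show ?thesis using v w by (auto simp: stopping_def)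
  qed
qed

lemma stopping_disjoint: "v \<in> stopping \<rho> \<Longrightarrow> w \<in> stopping \<rho> \<Longrightarrow> v \<noteq> w \<Longrightarrow> E v \<inter> E w = {}"
  using stopping_disjoint_aux by (metis disjoint_iff nat_le_linear)

lemma prefix_in_stopping:
  assumes s: "s \<in> infinite_words \<Sigma>" and \<rho>: "0 < \<rho>" "\<rho> < diameter (E [])"
  shows "\<exists>m. prefix_of s m \<in> stopping \<rho>"
proof -
  obtain n0 where "diameter (E (prefix_of s n0)) < \<rho>"
    using order_tendstoD(2)[OF diameter_tendsto_0[OF s] \<rho>(1)] by (auto simp: eventually_sequentially)
  then have ex: "diameter (E (prefix_of s n0)) \<le> \<rho>" by simp
  define m where "m = (LEAST m. diameter (E (prefix_of s m)) \<le> \<rho>)"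
  have m: "diameter (E (prefix_of s m)) \<le> \<rho>" unfolding m_def by (rule LeastI[of _ n0]) (rule ex)
  have m0: "m \<noteq> 0" using m \<rho> by (cases m) auto
  then obtain p where p: "m = Suc p" by (cases m) auto
  have "\<not> diameter (E (prefix_of s p)) \<le> \<rho>" unfolding m_def by (rule not_less_Least) (use p m_def in auto)
  moreover have "prefix_of s m \<noteq> []" using m0 by (metis prefix_of_length length_0_conv)
  ultimately have "prefix_of s m \<in> stopping \<rho>" using m p prefix_in[OF s] by (auto simp: stopping_def butlast_prefix_of)
  then show ?thesis by blast
qed

lemma min_child_diameter:
  assumes p: "p \<in> \<Sigma>"
  shows "w \<in> offspring \<Sigma> p \<Longrightarrow> Min (diameter ` E ` offspring \<Sigma> p) \<le> diameter (E w)"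
    and "Min (diameter ` E ` offspring \<Sigma> p) > 0"
proof -
  have fin: "finite (diameter ` E ` offspring \<Sigma> p)" using offspring_finite_nonempty[OF p] by simp
  then show "w \<in> offspring \<Sigma> p \<Longrightarrow> Min (diameter ` E ` offspring \<Sigma> p) \<le> diameter (E w)"
    by (intro Min_le) auto
  have "Min (diameter ` E ` offspring \<Sigma> p) \<in> diameter ` E ` offspring \<Sigma> p"
    using fin offspring_finite_nonempty[OF p] by (intro Min_in) auto
  then show "Min (diameter ` E ` offspring \<Sigma> p) > 0"
    using diameter_pos unfolding offspring_def by auto
qed

lemma ln_min_child_diameter_ge:
  assumes e: "0 < \<epsilon>" "\<epsilon> < 1"
  obtains N0 where "\<And>p. p \<in> \<Sigma> \<Longrightarrow> length p \<ge> N0 \<Longrightarrow> Min (diameter ` E ` offspring \<Sigma> p) < 1 \<Longrightarrow>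
    ln (diameter (E p)) / (1 - \<epsilon>) \<le> ln (Min (diameter ` E ` offspring \<Sigma> p))"
proof -
  obtain N0 where N0: "\<And>s n. s \<in> infinite_words \<Sigma> \<Longrightarrow> n \<ge> N0 \<Longrightarrow>
      \<bar>ln (diameter (E (prefix_of s n))) / ln (Min (diameter ` E ` offspring \<Sigma> (prefix_of s n))) - 1\<bar> < \<epsilon>"
    using diameter_ratio_children[OF e(1)] by blast
  show thesis
  proof (rule that)
    fix p assume p: "p \<in> \<Sigma>" "length p \<ge> N0" "Min (diameter ` E ` offspring \<Sigma> p) < 1"
    obtain s where s: "s \<in> infinite_words \<Sigma>" "prefix_of s (length p) = p"
      using extend_to_infinite_word[OF p(1)] by blast
    show "ln (diameter (E p)) / (1 - \<epsilon>) \<le> ln (Min (diameter ` E ` offspring \<Sigma> p))"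
      using ln_ge_of_ln_ratio_near_one[OF min_child_diameter(2)[OF p(1)] p(3) e diameter_pos[OF p(1)]]
        N0[OF s(1) p(2)] s(2) by simp
  qed
qed

lemma ln_diameter_prefix_ratio:
  assumes s: "s \<in> infinite_words \<Sigma>" and e: "\<epsilon> > 0"
  shows "eventually (\<lambda>n. ln (diameter (E (prefix_of s (Suc n)))) \<ge> (1+\<epsilon>) * ln (diameter (E (prefix_of s n)))) sequentially"
proof -
  let ?d = "\<lambda>n. diameter (E (prefix_of s n))"
  define e' where "e' = \<epsilon> / (1 + \<epsilon>)"
  have e': "0 < e'" "e' < 1" "1 / (1 - e') = 1 + \<epsilon>" using e unfolding e'_def by (auto simp: field_simps)
  obtain N0 where N0: "\<And>p. p \<in> \<Sigma> \<Longrightarrow> length p \<ge> N0 \<Longrightarrow> Min (diameter ` E ` offspring \<Sigma> p) < 1 \<Longrightarrow>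
      ln (diameter (E p)) / (1 - e') \<le> ln (Min (diameter ` E ` offspring \<Sigma> p))"
    using ln_min_child_diameter_ge[OF e'(1,2)] by blast
  have "eventually (\<lambda>n. ?d n < 1) sequentially" using order_tendstoD(2)[OF diameter_tendsto_0[OF s]] by simp
  then show ?thesis using eventually_ge_at_top[of N0]
  proof eventually_elim
    case (elim n)
    let ?m = "Min (diameter ` E ` offspring \<Sigma> (prefix_of s n))"
    have "prefix_of s (Suc n) \<in> offspring \<Sigma> (prefix_of s n)"
      unfolding offspring_def using prefix_in[OF s, of "Suc n"] by (simp add: prefix_of_Suc)
    then have m: "?m \<le> ?d (Suc n)" "?m > 0" using min_child_diameter[OF prefix_in[OF s]] by auto
    moreover have "?d (Suc n) \<le> ?d n" using diameter_prefix_antimono[OF s] by simp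
    ultimately have "ln (?d n) / (1 - e') \<le> ln ?m" using N0[OF prefix_in[OF s]] elim by simp
    then have "(1 + \<epsilon>) * ln (?d n) \<le> ln ?m" using e'(3) by (simp add: divide_inverse mult.commute)
    moreover have "ln ?m \<le> ln (?d (Suc n))" using m by simp
    ultimately show ?case by linarith
  qed
qed

lemma stopping_diameter_gt_powr:
  assumes D: "D > (0::nat)"
  shows "\<exists>\<rho>0>0. \<forall>\<rho>. 0 < \<rho> \<longrightarrow> \<rho> < \<rho>0 \<longrightarrow> (\<forall>w\<in>stopping \<rho>. diameter (E w) > \<rho> powr (1 + 1/real D))"
proof -
  define \<epsilon> where "\<epsilon> = 1 / (real D + 1)"
  have e: "0 < \<epsilon>" "\<epsilon> < 1" "1 / (1 - \<epsilon>) = 1 + 1 / real D" unfolding \<epsilon>_def using D by (auto simp: field_simps)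
  obtain N0 where N0: "\<And>p. p \<in> \<Sigma> \<Longrightarrow> length p \<ge> N0 \<Longrightarrow> Min (diameter ` E ` offspring \<Sigma> p) < 1 \<Longrightarrow>
      ln (diameter (E p)) / (1 - \<epsilon>) \<le> ln (Min (diameter ` E ` offspring \<Sigma> p))"
    using ln_min_child_diameter_ge[OF e(1,2)] by blast
  define short where "short = diameter ` E ` {w \<in> \<Sigma>. length w \<le> N0}"
  have "finite short" "short \<noteq> {}" unfolding short_def using finite_levels_le root_in by auto
  then have short: "Min short > 0" "\<And>w. w \<in> \<Sigma> \<Longrightarrow> length w \<le> N0 \<Longrightarrow> Min short \<le> diameter (E w)"
    using Min_in diameter_pos unfolding short_def by fastforce+
  have "diameter (E w) > \<rho> powr (1 + 1/real D)"
    if \<rho>: "0 < \<rho>" "\<rho> < min 1 (Min short)" and w: "w \<in> stopping \<rho>" for \<rho> w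
  proof -
    have wS: "w \<in> \<Sigma>" and wne: "w \<noteq> []" and dw: "diameter (E w) \<le> \<rho>"
      and dp: "diameter (E (butlast w)) > \<rho>" using w by (auto simp: stopping_def)
    have "length w > N0" using short(2)[OF wS] dw \<rho> by force
    moreover have "w \<in> offspring \<Sigma> (butlast w)"
      unfolding offspring_def using wS wne by (intro CollectI exI[of _ "last w"]) simp
    ultimately have m: "Min (diameter ` E ` offspring \<Sigma> (butlast w)) \<le> diameter (E w)"
      "0 < Min (diameter ` E ` offspring \<Sigma> (butlast w))" "length (butlast w) \<ge> N0"
      using min_child_diameter[OF butlast_in[OF wS]] by auto
    then have ln_min: "ln (diameter (E (butlast w))) * (1 + 1 / real D) \<le> ln (Min (diameter ` E ` offspring \<Sigma> (butlast w)))"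
      using N0[OF butlast_in[OF wS]] dw \<rho> e(3) by (simp add: divide_inverse)
    have "ln (\<rho> powr (1 + 1/real D)) = ln \<rho> * (1 + 1/real D)" using \<rho> by (simp add: ln_powr)
    also have "\<dots> < ln (diameter (E (butlast w))) * (1 + 1 / real D)"
      using dp \<rho> by (intro mult_strict_right_mono) (auto intro: add_pos_nonneg)
    also note ln_min
    finally have "\<rho> powr (1 + 1/real D) < Min (diameter ` E ` offspring \<Sigma> (butlast w))"
      using m(2) \<rho>(1) by (simp add: ln_less_cancel_iff[symmetric])
    then show ?thesis using m(1) by simp
  qed
  moreover have "min 1 (Min short) > 0" using short(1) by simp
  ultimately show ?thesis by blast
qed

definition C0 :: real where
  "C0 = (SOME c. c > 0 \<and> (\<forall>w \<in> \<Sigma>. \<exists>x \<in> E w. cball x (c * diameter (E w)) \<subseteq> E w))"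

lemma C0: "C0 > 0 \<and> (\<forall>w \<in> \<Sigma>. \<exists>x \<in> E w. cball x (C0 * diameter (E w)) \<subseteq> E w)"
  unfolding C0_def using someI_ex[OF inner_ball_exists] by simp

definition inner_centre :: "'i list \<Rightarrow> 'a" where
  "inner_centre w = (SOME x. x \<in> E w \<and> cball x (C0 * diameter (E w)) \<subseteq> E w)"

lemma inner_centre: "w \<in> \<Sigma> \<Longrightarrow> inner_centre w \<in> E w \<and> cball (inner_centre w) (C0 * diameter (E w)) \<subseteq> E w"
  unfolding inner_centre_def using C0 by (metis (no_types, lifting) someI_ex)

lemma E_root: "w \<in> \<Sigma> \<Longrightarrow> E w \<subseteq> E []"
  using E_subset_take[of w 0] by simp

lemma root_ball: "\<exists>x0 R0. R0 > 0 \<and> E [] \<subseteq> cball x0 R0"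
proof -
  obtain x0 e where e: "E [] \<subseteq> cball x0 e" "0 \<le> e"
    using bounded_E[OF root_in] unfolding bounded_subset_cball by blast
  then show ?thesis by (intro exI[of _ x0] exI[of _ "e+1"]) auto
qed

end

section \<open>Measures on Moran constructions\<close>

definition cylinder_exponent ::
  "('a::metric_space set \<Rightarrow> ennreal) \<Rightarrow> ('i list \<Rightarrow> 'a set) \<Rightarrow> (nat \<Rightarrow> 'i) \<Rightarrow> nat \<Rightarrow> real" where
  "cylinder_exponent \<mu> E s n =
     ln (enn2real (\<mu> (E (prefix_of s n)))) / ln (diameter (E (prefix_of s n)))"

locale moran_measure = moran \<Sigma> E
  for \<Sigma> :: "'i list set" and E :: "'i list \<Rightarrow> 'a::complete_space set" +
  fixes \<mu> :: "'a set \<Rightarrow> ennreal" and N :: nat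
  assumes doubling: "\<And>(x::'a) r. r > 0 \<Longrightarrow>
      \<exists>F. finite F \<and> card F \<le> N \<and> cball x r \<subseteq> (\<Union>y\<in>F. cball y (r/2))"
    and measure: "is_measure \<mu>"
    and support_subset: "support \<mu> \<subseteq> limit_set \<Sigma> E"
begin

lemma outer_measure: "outer_measure \<mu>"
  using measure by (simp add: is_measure_def borel_regular_outer_measure_def)

lemma mu_mono: "A \<subseteq> B \<Longrightarrow> \<mu> A \<le> \<mu> B" by (rule om_mono[OF outer_measure])

lemma mu_countable_subadditive: "\<mu> (\<Union>n. A n) \<le> (\<Sum>n. \<mu> (A n))"
  by (rule om_countable_subadditive[OF outer_measure])

lemma mu_bounded_finite: "bounded A \<Longrightarrow> \<mu> A < \<infinity>" using measure by (simp add: is_measure_def)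

lemma mu_closed_measurable: "closed B \<Longrightarrow> om_measurable \<mu> B"
  using measure borel_closed by (auto simp: is_measure_def borel_regular_outer_measure_def)

text \<open>By (M4) the centres of disjoint stopping cylinders of diameter \<open>\<ge> lb\<close> are
  \<open>C0 * lb\<close>-separated, so the doubling packing bound counts the cylinders.\<close>
lemma card_separated_stopping:
  assumes B: "B \<subseteq> stopping \<rho>" and sub: "\<And>Q. Q \<in> B \<Longrightarrow> E Q \<subseteq> cball x R" and R: "R > 0"
    and lb: "lb > 0" "\<And>Q. Q \<in> B \<Longrightarrow> lb \<le> diameter (E Q)" and j: "R / 2^j \<le> C0 * lb / 2"
  shows "finite B \<and> card B \<le> N^j"
proof -
  have BS: "Q \<in> \<Sigma>" if "Q \<in> B" for Q using B that by (auto simp: stopping_def)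
  have inj: "inj_on inner_centre B"
  proof (rule inj_onI)
    fix Q Q' assume q: "Q \<in> B" "Q' \<in> B" "inner_centre Q = inner_centre Q'"
    show "Q = Q'"
    proof (rule ccontr)
      assume "Q \<noteq> Q'"
      then have "E Q \<inter> E Q' = {}" using stopping_disjoint B q by blast
      then show False using inner_centre[OF BS[OF q(1)]] inner_centre[OF BS[OF q(2)]] q(3) by auto
    qed
  qed
  have P: "inner_centre ` B \<subseteq> cball x R" using sub inner_centre BS by blast
  have sep: "dist p q > C0 * lb" if pq: "p \<in> inner_centre ` B" "q \<in> inner_centre ` B" "p \<noteq> q" for p q
  proof -
    obtain Q Q' where Q: "Q \<in> B" "Q' \<in> B" "p = inner_centre Q" "q = inner_centre Q'" using pq(1,2) by blast
    have "Q \<noteq> Q'" using Q pq(3) by auto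
    then have dj: "E Q \<inter> E Q' = {}" using stopping_disjoint B Q by blast
    have "q \<in> E Q'" using inner_centre[OF BS[OF Q(2)]] Q by simp
    then have "q \<notin> cball p (C0 * diameter (E Q))" using inner_centre[OF BS[OF Q(1)]] Q dj by blast
    then have "dist p q > C0 * diameter (E Q)" by simp
    moreover have "C0 * lb \<le> C0 * diameter (E Q)" using lb(2)[OF Q(1)] C0 by simp
    ultimately show ?thesis by simp
  qed
  have "finite (inner_centre ` B) \<and> card (inner_centre ` B) \<le> N^j"
    by (rule doubling_packing[OF doubling P R sep j])
  moreover have "card (inner_centre ` B) = card B" using inj by (rule card_image)
  ultimately show ?thesis using inj finite_imageD by metis
qed

definition neighbours :: "real \<Rightarrow> 'i list \<Rightarrow> 'i list set" where
  "neighbours \<rho> P = {Q \<in> stopping \<rho>. \<exists>p\<in>E P. \<exists>q\<in>E Q. dist p q \<le> \<rho>}"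

lemma neighbours_sym:
  assumes Q: "Q \<in> neighbours \<rho> P" and P: "P \<in> stopping \<rho>"
  shows "P \<in> neighbours \<rho> Q"
proof -
  obtain p q where pq: "p \<in> E P" "q \<in> E Q" "dist p q \<le> \<rho>" using Q unfolding neighbours_def by blast
  have "dist q p \<le> \<rho>" using pq(3) by (simp add: dist_commute)
  then show ?thesis unfolding neighbours_def using P pq(1,2) by blast
qed

lemma neighbours_subset_cball:
  assumes P: "P \<in> stopping \<rho>" and p0: "p0 \<in> E P" and Q: "Q \<in> neighbours \<rho> P"
  shows "E Q \<subseteq> cball p0 (3 * \<rho>)"
proof
  fix q' assume q': "q' \<in> E Q"
  obtain p q where pq: "p \<in> E P" "q \<in> E Q" "dist p q \<le> \<rho>" using Q unfolding neighbours_def by blast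
  have PS: "P \<in> \<Sigma>" and dP: "diameter (E P) \<le> \<rho>" using P by (auto simp: stopping_def)
  have QS: "Q \<in> \<Sigma>" and dQ: "diameter (E Q) \<le> \<rho>" using Q unfolding neighbours_def by (auto simp: stopping_def)
  have "dist p0 p \<le> diameter (E P)" using diameter_bounded_bound[OF bounded_E[OF PS] p0 pq(1)] .
  moreover have "dist q q' \<le> diameter (E Q)" using diameter_bounded_bound[OF bounded_E[OF QS] pq(2) q'] .
  moreover have "dist p0 q' \<le> dist p0 p + dist p q + dist q q'"
    using dist_triangle[of p0 q' p] dist_triangle[of p q' q] by linarith
  ultimately have "dist p0 q' \<le> 3 * \<rho>" using pq(3) dP dQ by linarith
  then show "q' \<in> cball p0 (3 * \<rho>)" by simp
qed

lemma finite_stopping: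
  assumes lb: "lb > 0" "\<And>Q. Q \<in> stopping \<rho> \<Longrightarrow> lb \<le> diameter (E Q)"
  shows "finite (stopping \<rho>)"
proof -
  obtain x0 R0 where R0: "R0 > 0" "E [] \<subseteq> cball x0 R0" using root_ball by blast
  obtain j where "(1/2::real)^j < C0 * lb / 2 / R0"
    using real_arch_pow_inv[of "C0 * lb / 2 / R0" "1/2"] C0 lb R0 by auto
  then have j: "R0 / 2^j \<le> C0 * lb / 2" using R0 by (simp add: power_one_over field_simps)
  have "E Q \<subseteq> cball x0 R0" if "Q \<in> stopping \<rho>" for Q
    using that E_root R0(2) by (auto simp: stopping_def)
  then show ?thesis using card_separated_stopping[OF order_refl _ R0(1) lb j] by blast
qed

lemma card_neighbours_le:
  assumes \<rho>_pos: "\<rho> > 0" and P: "P \<in> stopping \<rho>"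
    and lb: "lb > 0" "\<And>Q. Q \<in> stopping \<rho> \<Longrightarrow> lb \<le> diameter (E Q)"
    and j: "3 * \<rho> / 2^j \<le> C0 * lb / 2"
  shows "finite (neighbours \<rho> P) \<and> card (neighbours \<rho> P) \<le> N^j"
proof -
  obtain p0 where p0: "p0 \<in> E P" using E_nonempty P by (auto simp: stopping_def)
  show ?thesis
  proof (rule card_separated_stopping[OF _ neighbours_subset_cball[OF P p0] _ lb(1) _ j])
    show "neighbours \<rho> P \<subseteq> stopping \<rho>" unfolding neighbours_def by auto
    then show "Q \<in> neighbours \<rho> P \<Longrightarrow> lb \<le> diameter (E Q)" for Q using lb(2) by auto
    show "0 < 3 * \<rho>" using \<rho>_pos by simp
  qed
qed

text \<open>Stopping words at scale \<open>2^-k\<close> have diameter at least \<open>2^-(k + k div D + 1)\<close>, so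
  their neighbourhoods contain at most \<open>N^(c + k div D + 2)\<close> words: a subexponential count
  once \<open>D\<close> is large compared with \<open>N\<close>.\<close>

lemma stopping_counts:
  assumes D: "D > (0::nat)"
  shows "\<exists>K c. \<forall>k\<ge>K. (1/2::real)^k < diameter (E []) \<and> finite (stopping ((1/2)^k)) \<and>
      (\<forall>P \<in> stopping ((1/2)^k). card (neighbours ((1/2)^k) P) \<le> N^(c + k div D + 2))"
proof -
  obtain \<rho>0 where \<rho>0: "\<rho>0 > 0"
    "\<And>\<rho> w. 0 < \<rho> \<Longrightarrow> \<rho> < \<rho>0 \<Longrightarrow> w \<in> stopping \<rho> \<Longrightarrow> diameter (E w) > \<rho> powr (1 + 1/real D)"
    using stopping_diameter_gt_powr[OF D] by blast
  obtain K where K: "(1/2::real)^K < min \<rho>0 (diameter (E []))"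
    using real_arch_pow_inv[of "min \<rho>0 (diameter (E []))" "1/2"] \<rho>0 diameter_pos[OF root_in] by auto
  obtain c :: nat where "3 / C0 \<le> real c" using real_arch_simple by blast
  then have "3 \<le> C0 * real c" using C0 by (simp add: divide_le_eq mult.commute)
  also have "\<dots> \<le> C0 * 2^c"
    using of_nat_less_two_power[of c, where 'a=real] C0 by (intro mult_left_mono) auto
  finally have c: "3 / 2^c \<le> C0" by (simp add: divide_le_eq mult.commute)
  have "(1/2::real)^k < diameter (E []) \<and> finite (stopping ((1/2)^k)) \<and>
      (\<forall>P \<in> stopping ((1/2)^k). card (neighbours ((1/2)^k) P) \<le> N^(c + k div D + 2))"
    if k: "k \<ge> K" for k
  proof -
    define \<rho> where "\<rho> = (1/2::real)^k"
    have "\<rho> \<le> (1/2)^K" unfolding \<rho>_def using k by (intro power_decreasing) auto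
    moreover have "(1/2::real)^K < \<rho>0" "(1/2::real)^K < diameter (E [])" using K by auto
    ultimately have \<rho>: "\<rho> > 0" "\<rho> < \<rho>0" "\<rho> < diameter (E [])"
      by (simp add: \<rho>_def, linarith, linarith)
    define lb where "lb = (1/2::real)^(k + k div D + 1)"
    have lb0: "lb > 0" unfolding lb_def by simp
    have lbQ: "lb \<le> diameter (E Q)" if "Q \<in> stopping \<rho>" for Q
      using \<rho>0(2)[OF \<rho>(1,2) that] powr_half_bound[OF D, of k] unfolding lb_def \<rho>_def by linarith
    have "3 * \<rho> / 2^(c + k div D + 2) = 3 / 2^c * (lb / 2)"
      unfolding \<rho>_def lb_def by (simp add: power_add power_one_over field_simps)
    also have "\<dots> \<le> C0 * (lb / 2)" using c lb0 by (intro mult_right_mono) auto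
    finally have "3 * \<rho> / 2^(c + k div D + 2) \<le> C0 * lb / 2" by simp
    then show ?thesis
      using \<rho> finite_stopping[OF lb0 lbQ] card_neighbours_le[OF \<rho>(1) _ lb0 lbQ] unfolding \<rho>_def by blast
  qed
  then show ?thesis by blast
qed

definition ball_controlled :: "nat \<Rightarrow> nat \<Rightarrow> (nat \<Rightarrow> 'i) \<Rightarrow> bool" where
  "ball_controlled J k s \<longleftrightarrow> (\<exists>m. diameter (E (prefix_of s m)) \<le> (1/2)^k \<and>
     \<mu> (cball (moran_point E s) ((1/2)^k)) \<le> ennreal (2^(k div J)) * \<mu> (E (prefix_of s m)))"

definition uncontrolled :: "nat \<Rightarrow> nat \<Rightarrow> 'a set" where
  "uncontrolled J k = {x \<in> support \<mu>. \<exists>s\<in>infinite_words \<Sigma>. x = moran_point E s \<and> \<not> ball_controlled J k s}"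

lemma cball_measure_le_neighbours:
  assumes fin: "finite (stopping \<rho>)" and \<rho>: "0 < \<rho>" "\<rho> < diameter (E [])"
    and P: "P \<in> stopping \<rho>" and x: "x \<in> E P"
  shows "\<mu> (cball x \<rho>) \<le> (\<Sum>Q\<in>neighbours \<rho> P. \<mu> (E Q))"
proof -
  have finN: "finite (neighbours \<rho> P)" using fin unfolding neighbours_def by simp
  have sub: "cball x \<rho> \<subseteq> (cball x \<rho> - support \<mu>) \<union> (\<Union>Q\<in>neighbours \<rho> P. E Q)"
  proof
    fix z assume z: "z \<in> cball x \<rho>"
    show "z \<in> (cball x \<rho> - support \<mu>) \<union> (\<Union>Q\<in>neighbours \<rho> P. E Q)"
    proof (cases "z \<in> support \<mu>")
      case False then show ?thesis using z by blast
    next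
      case True
      then have "z \<in> limit_set \<Sigma> E" using support_subset by blast
      then obtain t where t: "t \<in> infinite_words \<Sigma>" "\<And>n. z \<in> E (prefix_of t n)" using limit_set_word by blast
      obtain m where m: "prefix_of t m \<in> stopping \<rho>" using prefix_in_stopping[OF t(1) \<rho>] by blast
      have "dist x z \<le> \<rho>" using z by simp
      then have "prefix_of t m \<in> neighbours \<rho> P" unfolding neighbours_def using m x t(2)[of m] by blast
      then show ?thesis using t(2)[of m] by blast
    qed
  qed
  have "\<mu> (cball x \<rho>) \<le> \<mu> ((cball x \<rho> - support \<mu>) \<union> (\<Union>Q\<in>neighbours \<rho> P. E Q))" using sub by (rule mu_mono)
  also have "\<dots> \<le> \<mu> (cball x \<rho> - support \<mu>) + \<mu> (\<Union>Q\<in>neighbours \<rho> P. E Q)" by (rule om_Un_le[OF outer_measure])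
  also have "\<mu> (cball x \<rho> - support \<mu>) = 0" by (rule om_null_outside_support[OF outer_measure doubling bounded_cball])
  also have "0 + \<mu> (\<Union>Q\<in>neighbours \<rho> P. E Q) \<le> (\<Sum>Q\<in>neighbours \<rho> P. \<mu> (E Q))"
    using om_UN_finite_le[OF outer_measure finN] by simp
  finally show ?thesis .
qed

lemma sum_neighbours_le:
  assumes fin: "finite (stopping \<rho>)"
    and card: "\<And>P. P \<in> stopping \<rho> \<Longrightarrow> card (neighbours \<rho> P) \<le> M"
  shows "(\<Sum>P\<in>stopping \<rho>. \<Sum>Q\<in>neighbours \<rho> P. \<mu> (E Q)) \<le> of_nat M * \<mu> (E [])"
proof -
  let ?A = "stopping \<rho>"
  have AS: "P \<in> \<Sigma>" if "P \<in> ?A" for P using that by (auto simp: stopping_def)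
  have "(\<Sum>P\<in>?A. \<Sum>Q\<in>neighbours \<rho> P. \<mu> (E Q)) = (\<Sum>P\<in>?A. \<Sum>Q\<in>{Q. Q \<in> ?A \<and> Q \<in> neighbours \<rho> P}. \<mu> (E Q))"
    by (intro sum.cong refl) (auto simp: neighbours_def intro: arg_cong[where f="\<lambda>S. sum _ S"])
  also have "\<dots> = (\<Sum>Q\<in>?A. \<Sum>P\<in>{P. P \<in> ?A \<and> Q \<in> neighbours \<rho> P}. \<mu> (E Q))"
    by (rule sum.swap_restrict[OF fin fin])
  also have "\<dots> = (\<Sum>Q\<in>?A. of_nat (card {P. P \<in> ?A \<and> Q \<in> neighbours \<rho> P}) * \<mu> (E Q))"
    by simp
  also have "\<dots> \<le> (\<Sum>Q\<in>?A. of_nat M * \<mu> (E Q))"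
  proof (intro sum_mono mult_right_mono)
    fix Q assume Q: "Q \<in> ?A"
    have "{P. P \<in> ?A \<and> Q \<in> neighbours \<rho> P} \<subseteq> neighbours \<rho> Q" using neighbours_sym Q by blast
    moreover have "finite (neighbours \<rho> Q)" using fin unfolding neighbours_def by simp
    ultimately have "card {P. P \<in> ?A \<and> Q \<in> neighbours \<rho> P} \<le> card (neighbours \<rho> Q)"
      by (simp add: card_mono)
    then have "card {P. P \<in> ?A \<and> Q \<in> neighbours \<rho> P} \<le> M" using card[OF Q] by linarith
    then show "(of_nat (card {P. P \<in> ?A \<and> Q \<in> neighbours \<rho> P}) :: ennreal) \<le> of_nat M" by simp
  qed simp
  also have "\<dots> = of_nat M * (\<Sum>Q\<in>?A. \<mu> (E Q))" by (simp add: sum_distrib_left)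
  also have "(\<Sum>Q\<in>?A. \<mu> (E Q)) = \<mu> (\<Union>Q\<in>?A. E Q)"
  proof (rule om_sum_disjoint[OF outer_measure fin _ stopping_disjoint])
    show "om_measurable \<mu> (E Q)" if "Q \<in> ?A" for Q
      using mu_closed_measurable[OF compact_imp_closed[OF compact_E[OF AS[OF that]]]] .
  qed
  also have "\<mu> (\<Union>Q\<in>?A. E Q) \<le> \<mu> (E [])" using E_root AS by (intro mu_mono) blast
  finally show ?thesis by (simp add: mult_left_mono)
qed

text \<open>Each uncontrolled point lies in a stopping cylinder \<open>P\<close> whose measure is less than
  \<open>2^-(k div J)\<close> times the measure of its neighbourhood; summing over these \<open>P\<close> and
  double counting the neighbours bounds the uncontrolled set.\<close>

lemma uncontrolled_measure_le:
  assumes fin: "finite (stopping \<rho>)" and \<rho>: "\<rho> = (1/2)^k" "\<rho> < diameter (E [])"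
    and card: "\<And>P. P \<in> stopping \<rho> \<Longrightarrow> card (neighbours \<rho> P) \<le> M"
  shows "ennreal (2^(k div J)) * \<mu> (uncontrolled J k) \<le> of_nat M * \<mu> (E [])"
proof -
  have \<rho>0: "\<rho> > 0" using \<rho> by simp
  let ?c = "ennreal (2^(k div J))"
  define bad where "bad = {P \<in> stopping \<rho>. ?c * \<mu> (E P) < (\<Sum>Q\<in>neighbours \<rho> P. \<mu> (E Q))}"
  have bad: "bad \<subseteq> stopping \<rho>" "finite bad" using fin finite_subset unfolding bad_def by auto
  have cover: "uncontrolled J k \<subseteq> (\<Union>P\<in>bad. E P)"
  proof
    fix x assume "x \<in> uncontrolled J k"
    then obtain s where s: "s \<in> infinite_words \<Sigma>" "x = moran_point E s" "\<not> ball_controlled J k s"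
      unfolding uncontrolled_def by blast
    obtain m where m: "prefix_of s m \<in> stopping \<rho>" using prefix_in_stopping[OF s(1) \<rho>0 \<rho>(2)] by blast
    have xin: "x \<in> E (prefix_of s m)" using moran_point_in[OF s(1)] s(2) by simp
    have "diameter (E (prefix_of s m)) \<le> (1/2)^k" using m \<rho>(1) by (simp add: stopping_def)
    then have "\<not> \<mu> (cball x \<rho>) \<le> ?c * \<mu> (E (prefix_of s m))"
      using s(3) unfolding ball_controlled_def s(2) \<rho>(1) by blast
    then have "?c * \<mu> (E (prefix_of s m)) < \<mu> (cball x \<rho>)" by simp
    also have "\<dots> \<le> (\<Sum>Q\<in>neighbours \<rho> (prefix_of s m). \<mu> (E Q))"
      by (rule cball_measure_le_neighbours[OF fin \<rho>0 \<rho>(2) m xin])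
    finally have "prefix_of s m \<in> bad" unfolding bad_def using m by blast
    then show "x \<in> (\<Union>P\<in>bad. E P)" using xin by blast
  qed
  have "\<mu> (uncontrolled J k) \<le> \<mu> (\<Union>P\<in>bad. E P)" using cover by (rule mu_mono)
  also have "\<dots> \<le> (\<Sum>P\<in>bad. \<mu> (E P))" by (rule om_UN_finite_le[OF outer_measure bad(2)])
  finally have "?c * \<mu> (uncontrolled J k) \<le> ?c * (\<Sum>P\<in>bad. \<mu> (E P))" by (rule mult_left_mono) simp
  also have "\<dots> = (\<Sum>P\<in>bad. ?c * \<mu> (E P))" by (simp add: sum_distrib_left)
  also have "\<dots> \<le> (\<Sum>P\<in>bad. \<Sum>Q\<in>neighbours \<rho> P. \<mu> (E Q))"
    by (intro sum_mono) (auto simp: bad_def)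
  also have "\<dots> \<le> (\<Sum>P\<in>stopping \<rho>. \<Sum>Q\<in>neighbours \<rho> P. \<mu> (E Q))"
    by (rule sum_mono2[OF fin bad(1)]) simp
  also have "\<dots> \<le> of_nat M * \<mu> (E [])" by (rule sum_neighbours_le[OF fin card])
  finally show ?thesis .
qed

lemma uncontrolled_measure_geometric:
  assumes J: "J > (0::nat)"
  shows "\<exists>K C. C \<ge> 0 \<and> (\<forall>k\<ge>K. \<mu> (uncontrolled J k) \<le> ennreal (C * (1/2)^(k div (2*J))))"
proof -
  define D where "D = 2 * J * (N + 1)"
  have D: "D > 0" unfolding D_def using J by simp
  obtain K c where Kc: "\<And>k. k \<ge> K \<Longrightarrow> (1/2::real)^k < diameter (E []) \<and> finite (stopping ((1/2)^k)) \<and>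
      (\<forall>P \<in> stopping ((1/2)^k). card (neighbours ((1/2)^k) P) \<le> N^(c + k div D + 2))"
    using stopping_counts[OF D] by blast
  define e0 where "e0 = enn2real (\<mu> (E []))"
  have e0: "e0 \<ge> 0" "\<mu> (E []) = ennreal e0"
    unfolding e0_def using mu_bounded_finite[OF bounded_E[OF root_in]] by auto
  have "\<mu> (uncontrolled J k) \<le> ennreal (real (N^(c+2)) * e0 * (1/2)^(k div (2*J)))" if k: "k \<ge> K" for k
  proof -
    have "uncontrolled J k \<subseteq> E []"
    proof
      fix x assume "x \<in> uncontrolled J k"
      then obtain s where "s \<in> infinite_words \<Sigma>" "x = moran_point E s" unfolding uncontrolled_def by blast
      then show "x \<in> E []" using moran_point_in[of s 0] by simp
    qed
    then have "\<mu> (uncontrolled J k) < \<infinity>" using mu_bounded_finite bounded_subset[OF bounded_E[OF root_in]] by blast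
    then obtain b where b: "b \<ge> 0" "\<mu> (uncontrolled J k) = ennreal b"
      by (intro that[of "enn2real (\<mu> (uncontrolled J k))"]) auto
    have "ennreal (2^(k div J) * b) = ennreal (2^(k div J)) * \<mu> (uncontrolled J k)"
      using b by (simp add: ennreal_mult)
    also have "\<dots> \<le> of_nat (N^(c + k div D + 2)) * \<mu> (E [])"
      using Kc[OF k] by (intro uncontrolled_measure_le) auto
    also have "\<dots> = ennreal (real (N^(c + k div D + 2)) * e0)"
      using e0 by (simp add: ennreal_mult ennreal_of_nat_eq_real_of_nat)
    finally have "2^(k div J) * b \<le> real (N^(c + k div D + 2)) * e0"
      using e0(1) by (simp add: ennreal_le_iff)
    then have "b \<le> real (N^(c+2)) * e0 * (1/2)^(k div (2*J))"
      unfolding D_def by (rule le_half_power_div_of_count[OF b(1) e0(1)])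
    then show ?thesis using b(2) by (simp add: ennreal_leI)
  qed
  then show ?thesis using e0(1) by (intro exI[of _ K] exI[of _ "real (N^(c+2)) * e0"]) auto
qed

definition often_uncontrolled :: "nat \<Rightarrow> 'a set" where
  "often_uncontrolled J = {x. \<forall>K. \<exists>k\<ge>K. x \<in> uncontrolled J k}"

lemma often_uncontrolled_null:
  assumes "J > 0"
  shows "\<mu> (often_uncontrolled J) = 0"
proof -
  obtain K C where "C \<ge> 0" "\<And>k. k \<ge> K \<Longrightarrow> \<mu> (uncontrolled J k) \<le> ennreal (C * (1/2)^(k div (2*J)))"
    using uncontrolled_measure_geometric[OF assms] by blast
  moreover have "summable (\<lambda>k. C * (1/2::real)^(k div (2*J)))"
    using summable_half_power_div[of "2*J"] assms by (intro summable_mult) auto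
  ultimately show ?thesis unfolding often_uncontrolled_def
    by (intro om_limsup_null[OF outer_measure, where c="\<lambda>k. C * (1/2)^(k div (2*J))"]) auto
qed

abbreviation local_dims_match :: "(nat \<Rightarrow> 'i) \<Rightarrow> bool" where
  "local_dims_match s \<equiv>
     upper_local_dim \<mu> (moran_point E s) = limsup (\<lambda>n. ereal (cylinder_exponent \<mu> E s n)) \<and>
     lower_local_dim \<mu> (moran_point E s) = liminf (\<lambda>n. ereal (cylinder_exponent \<mu> E s n))"

lemma local_dims_outside_support:
  assumes s: "s \<in> infinite_words \<Sigma>" and x: "moran_point E s \<notin> support \<mu>"
  shows "local_dims_match s"
proof -
  let ?x = "moran_point E s"
  obtain r0 where r0: "r0 > 0" "\<mu> (ball ?x r0) = 0" using x unfolding support_def by (auto simp: not_gr_zero)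
  have null: "\<mu> A = 0" if "A \<subseteq> ball ?x r0" for A using mu_mono[OF that] r0(2) by simp
  have "\<forall>r>0. r < r0 \<longrightarrow> ereal (ln (enn2real (\<mu> (cball ?x r))) / ln r) = 0"
  proof (intro allI impI)
    fix r :: real assume "r > 0" "r < r0"
    then have "\<mu> (cball ?x r) = 0" by (intro null) auto
    then show "ereal (ln (enn2real (\<mu> (cball ?x r))) / ln r) = 0" by simp
  qed
  then have "eventually (\<lambda>r. ereal (ln (enn2real (\<mu> (cball ?x r))) / ln r) = 0) (at_right 0)"
    unfolding eventually_at_right_field using r0(1) by blast
  then have balls: "((\<lambda>r. ereal (ln (enn2real (\<mu> (cball ?x r))) / ln r)) \<longlongrightarrow> 0) (at_right 0)"
    by (rule tendsto_eventually)
  have "eventually (\<lambda>n. diameter (E (prefix_of s n)) < r0) sequentially"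
    using order_tendstoD(2)[OF diameter_tendsto_0[OF s] r0(1)] .
  then have "eventually (\<lambda>n. ereal (cylinder_exponent \<mu> E s n) = 0) sequentially"
  proof eventually_elim
    case (elim n)
    have "E (prefix_of s n) \<subseteq> ball ?x r0"
      using E_prefix_subset_cball[OF s order_refl] elim by fastforce
    then show ?case unfolding cylinder_exponent_def using null by simp
  qed
  then have cylinders: "((\<lambda>n. ereal (cylinder_exponent \<mu> E s n)) \<longlongrightarrow> 0) sequentially"
    by (rule tendsto_eventually)
  show ?thesis
    unfolding upper_local_dim_def lower_local_dim_def
    using lim_imp_Limsup[OF _ balls] lim_imp_Liminf[OF _ balls]
      lim_imp_Limsup[OF _ cylinders] lim_imp_Liminf[OF _ cylinders]
    by simp
qed

lemma dyadic_control_at: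
  assumes s: "s \<in> infinite_words \<Sigma>" and x: "moran_point E s \<in> support \<mu>"
    and nz: "\<And>J. J > 0 \<Longrightarrow> moran_point E s \<notin> often_uncontrolled J" and \<eta>: "\<eta> > 0"
  shows "\<exists>K. \<forall>k\<ge>K. \<exists>m. diameter (E (prefix_of s m)) \<le> (1/2)^k \<and>
    enn2real (\<mu> (cball (moran_point E s) ((1/2)^k))) \<le> (2 powr \<eta>)^k * enn2real (\<mu> (E (prefix_of s m)))"
proof -
  define J where "J = nat \<lceil>1/\<eta>\<rceil> + 1"
  have "1 / \<eta> \<le> real J" unfolding J_def by linarith
  moreover have "J > 0" unfolding J_def by simp
  ultimately have J: "J > 0" "1 / real J \<le> \<eta>" using \<eta> by (simp_all add: divide_le_eq mult.commute)
  obtain K where K: "\<And>k. k \<ge> K \<Longrightarrow> moran_point E s \<notin> uncontrolled J k"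
    using nz[OF J(1)] unfolding often_uncontrolled_def by blast
  have "\<exists>m. diameter (E (prefix_of s m)) \<le> (1/2)^k \<and>
      enn2real (\<mu> (cball (moran_point E s) ((1/2)^k))) \<le> (2 powr \<eta>)^k * enn2real (\<mu> (E (prefix_of s m)))"
    if k: "k \<ge> K" for k
  proof -
    have "ball_controlled J k s" using K[OF k] x s unfolding uncontrolled_def by blast
    then obtain m where m: "diameter (E (prefix_of s m)) \<le> (1/2)^k"
      "\<mu> (cball (moran_point E s) ((1/2)^k)) \<le> ennreal (2^(k div J)) * \<mu> (E (prefix_of s m))"
      unfolding ball_controlled_def by blast
    have fin: "\<mu> (E (prefix_of s m)) < \<infinity>" using mu_bounded_finite[OF bounded_E[OF prefix_in[OF s]]] .
    have "enn2real (\<mu> (cball (moran_point E s) ((1/2)^k))) \<le> 2^(k div J) * enn2real (\<mu> (E (prefix_of s m)))"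
      using enn2real_mono[OF m(2)] fin by (simp add: ennreal_mult_less_top enn2real_mult)
    also have "\<dots> \<le> (2 powr \<eta>)^k * enn2real (\<mu> (E (prefix_of s m)))"
      using two_power_div_le_powr[OF J] by (intro mult_right_mono) auto
    finally show ?thesis using m(1) by blast
  qed
  then show ?thesis by blast
qed

lemma local_dims_on_support:
  assumes s: "s \<in> infinite_words \<Sigma>" and x: "moran_point E s \<in> support \<mu>"
    and nz: "\<And>J. J > 0 \<Longrightarrow> moran_point E s \<notin> often_uncontrolled J"
  shows "local_dims_match s"
proof -
  let ?x = "moran_point E s"
  define d where "d n = diameter (E (prefix_of s n))" for n
  define a where "a n = enn2real (\<mu> (E (prefix_of s n)))" for n
  define b where "b r = enn2real (\<mu> (cball ?x r))" for r
  have fin: "\<mu> (E (prefix_of s n)) < \<infinity>" "\<mu> (cball ?x r) < \<infinity>" for n r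
    using mu_bounded_finite bounded_E[OF prefix_in[OF s]] by auto
  interpret T: scale_comparison d a b
  proof
    show "d n > 0" for n unfolding d_def using diameter_pos prefix_in[OF s] by blast
    show "m \<le> n \<Longrightarrow> d n \<le> d m" for m n unfolding d_def using diameter_prefix_antimono[OF s] by blast
    show "d \<longlonglongrightarrow> 0" unfolding d_def using diameter_tendsto_0[OF s] .
    show "m \<le> n \<Longrightarrow> a n \<le> a m" for m n
      unfolding a_def using fin by (intro enn2real_mono mu_mono E_prefix_antimono[OF s]) auto
    show "b r > 0" if "r > 0" for r
    proof -
      have "0 < \<mu> (ball ?x r)" using x that unfolding support_def by blast
      also have "\<dots> \<le> \<mu> (cball ?x r)" by (rule mu_mono) auto
      finally show ?thesis unfolding b_def using fin by (simp add: enn2real_positive_iff)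
    qed
    show "b r \<le> b r'" if "0 < r" "r \<le> r'" for r r'
      unfolding b_def using fin that by (intro enn2real_mono mu_mono) auto
    show "d n \<le> r \<Longrightarrow> a n \<le> b r" for n r
      unfolding a_def b_def d_def using fin
      by (intro enn2real_mono mu_mono E_prefix_subset_cball[OF s]) auto
    show "\<epsilon> > 0 \<Longrightarrow> eventually (\<lambda>n. (1+\<epsilon>) * ln (d n) \<le> ln (d (Suc n))) sequentially" for \<epsilon>
      unfolding d_def using ln_diameter_prefix_ratio[OF s] by blast
    show "\<eta> > 0 \<Longrightarrow> \<exists>K. \<forall>k\<ge>K. \<exists>m. d m \<le> (1/2)^k \<and> b ((1/2)^k) \<le> (2 powr \<eta>)^k * a m" for \<eta>
      unfolding a_def b_def d_def using dyadic_control_at[OF s x nz] by blast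
  qed
  show ?thesis
    using T.Limsup_ball_exp T.Liminf_ball_exp
    unfolding upper_local_dim_def lower_local_dim_def T.ball_exp_def T.seq_exp_def
      a_def b_def d_def cylinder_exponent_def
    by simp
qed

lemma local_dims_ae: "\<exists>Z. \<mu> Z = 0 \<and> (\<forall>s \<in> infinite_words \<Sigma>. moran_point E s \<notin> Z \<longrightarrow> local_dims_match s)"
proof -
  define Z where "Z = (\<Union>J. often_uncontrolled (Suc J))"
  have "\<mu> Z \<le> (\<Sum>J. \<mu> (often_uncontrolled (Suc J)))" unfolding Z_def by (rule mu_countable_subadditive)
  then have "\<mu> Z = 0" using often_uncontrolled_null by simp
  moreover have "local_dims_match s" if s: "s \<in> infinite_words \<Sigma>" and "moran_point E s \<notin> Z" for s
  proof -
    have "moran_point E s \<notin> often_uncontrolled J" if "J > 0" for J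
      using \<open>moran_point E s \<notin> Z\<close> \<open>J > 0\<close> unfolding Z_def by (cases J) auto
    then show ?thesis using local_dims_on_support[OF s] local_dims_outside_support[OF s] by blast
  qed
  ultimately show ?thesis by blast
qed

end

theorem lemma4p2:
  fixes \<Sigma> :: "'i::countable list set"
    and E :: "'i list \<Rightarrow> 'a::complete_space set"
    and \<mu> :: "'a set \<Rightarrow> ennreal"
  assumes "doubling_space TYPE('a)"
    and "moran_construction \<Sigma> E"
    and "is_measure \<mu>"
    and "support \<mu> \<subseteq> limit_set \<Sigma> E"
  shows "\<exists>Z. \<mu> Z = 0 \<and>
           (\<forall>s \<in> infinite_words \<Sigma>. moran_point E s \<notin> Z \<longrightarrow>
              upper_local_dim \<mu> (moran_point E s) =
                limsup (\<lambda>n. ereal (ln (enn2real (\<mu> (E (prefix_of s n)))) /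
                                   ln (diameter (E (prefix_of s n))))) \<and>
              lower_local_dim \<mu> (moran_point E s) =
                liminf (\<lambda>n. ereal (ln (enn2real (\<mu> (E (prefix_of s n)))) /
                                   ln (diameter (E (prefix_of s n))))))"
proof -
  obtain N where "\<And>(x::'a) r. r > 0 \<Longrightarrow>
      \<exists>F. finite F \<and> card F \<le> N \<and> cball x r \<subseteq> (\<Union>y\<in>F. cball y (r/2))"
    using assms(1) unfolding doubling_space_def by blast
  then interpret moran_measure \<Sigma> E \<mu> N
    using assms(2-) by unfold_locales
  show ?thesis using local_dims_ae unfolding cylinder_exponent_def .
qed

end
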